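(* (Local Lipschitz continuity of the backstepping control kernel operators.) For every $\bar\tau>0$ and every $M>0$ there exist constants $L_K,L_J,L_L>0$ such that for all $\tau_1,\tau_2\in(0,\bar\tau]$, all $\eta_1\in(0,\tau_1)$, $\eta_2\in(0,\tau_2)$, all $f_1,f_2\in C^1(\mathcal T_1)$ and all $c_1,c_2\in\underline C$ with $\|f_i\|_{C^1(\mathcal T_1)}\le M$ and $\|c_i\|_{C^1[0,1]}\le M$ ($i=1,2$): \begin{align*} \|\mathcal K(\tau_1,f_1,c_1)-\mathcal K(\tau_2,f_2,c_2)\|&\le L_K\max\{|\tau_1-\tau_2|,\|f_1-f_2\|,\|c_1-c_2\|\},\\ \|\mathcal L(\tau_1,\eta_1,f_1,c_1)-\mathcal L(\tau_2,\eta_2,f_2,c_2)\|&\le L_L\max\{|\tau_1-\tau_2|,|\eta_1-\eta_2|,\|f_1-f_2\|,\|c_1-c_2\|\},\\ \|\mathcal J(\tau_1,f_1,c_1)-\mathcal J(\tau_2,f_2,c_2)\|&\le L_J\max\{|\tau_1-\tau_2|,\|f_1-f_2\|,\|c_1-c_2\|\}, \end{align*} where on the left the sup norm is over $\mathcal T_1$ for $\mathcal K$ and over $[0,1]$ for $\mathcal L,\mathcal J$ (both vanish on $[1,\infty)$), and on the right $\|\cdot\|$ are sup norms.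
   Context: Notation: $\mathcal T_1=\{(s,q):0\le s\le q\le 1\}$; $\underline C=\{c\in C^1[0,1]:c(1)=0\}$; $\|g\|$ denotes the sup norm of $g$ over its domain. Control kernels: given a delay $\tau>0$, $f\in C^1(\mathcal T_1)$ and $c\in\underline C$, let $K\in C^0(\mathcal T_1)$ be the unique continuous solution of the integral equation $$K(s,q)=-\int_s^{s+1-q}f(\theta,\theta-s+q)\,d\theta+\int_s^{s+1-q}\!\int_\theta^{\theta-s+q}f(r,\theta-s+q)K(\theta,r)\,dr\,d\theta+\mathbf 1_{\{s+\tau<q\}}\Big(-c(s-q+1+\tau)+\int_{s-q+1+\tau}^1c(\theta)K(s-q+1+\tau,\theta)\,d\theta\Big),$$ which is the characteristic form of $K_s+K_q=f(s,q)-\int_s^qK(s,r)f(r,q)\,dr$ on $\mathcal T_1$ with $K(s,1)=\int_{s+\tau}^1K(s+\tau,\theta)c(\theta)d\theta-c(s+\tau)$ if $s+\tau<1$ and $K(s,1)=0$ if $s+\tau\ge1$. Define $J(\sigma)=\int_\sigma^1K(\sigma,q)c(q)\,dq-c(\sigma)$ for $0\le\sigma<1$ and $J(\sigma)=0$ for $\sigma\ge1$; and for $\eta>0$ define $L(\phi)=J(\phi+\eta)$ for $0\le\phi<1$ and $L(\phi)=0$ for $\phi\ge1$. The kernel operators are $\mathcal K(\tau,f,c):=K$, $\mathcal J(\tau,f,c):=J$, $\mathcal L(\tau,\eta,f,c):=L$. *)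

theory Defs
  imports "HOL-Analysis.Analysis"
begin

definition T1 :: "(real \<times> real) set" where
  "T1 = {(s, q). 0 \<le> s \<and> s \<le> q \<and> q \<le> 1}"

definition C1_T1_bounded :: "(real \<times> real \<Rightarrow> real) \<Rightarrow> real \<Rightarrow> bool" where
  "C1_T1_bounded f M \<longleftrightarrow>
     (\<exists>fs fq. continuous_on T1 fs \<and> continuous_on T1 fq \<and>
        (\<forall>x\<in>T1. (f has_derivative (\<lambda>(h, k). fs x * h + fq x * k)) (at x within T1)) \<and>
        (\<forall>x\<in>T1. \<bar>f x\<bar> \<le> M \<and> \<bar>fs x\<bar> \<le> M \<and> \<bar>fq x\<bar> \<le> M))"

definition Cunder_bounded :: "(real \<Rightarrow> real) \<Rightarrow> real \<Rightarrow> bool" where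
  "Cunder_bounded c M \<longleftrightarrow>
     c 1 = 0 \<and>
     (\<exists>c'. continuous_on {0..1} c' \<and>
        (\<forall>x\<in>{0..1}. (c has_real_derivative c' x) (at x within {0..1})) \<and>
        (\<forall>x\<in>{0..1}. \<bar>c x\<bar> \<le> M \<and> \<bar>c' x\<bar> \<le> M))"

definition supn :: "'a set \<Rightarrow> ('a \<Rightarrow> real) \<Rightarrow> real" where
  "supn A g = Sup ((\<lambda>x. \<bar>g x\<bar>) ` A)"

definition Krhs :: "real \<Rightarrow> (real \<times> real \<Rightarrow> real) \<Rightarrow> (real \<Rightarrow> real)
    \<Rightarrow> (real \<times> real \<Rightarrow> real) \<Rightarrow> real \<Rightarrow> real \<Rightarrow> real" where
  "Krhs \<tau> f c K s q =
     - integral {s..s + 1 - q} (\<lambda>\<theta>. f (\<theta>, \<theta> - s + q))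
     + integral {s..s + 1 - q}
         (\<lambda>\<theta>. integral {\<theta>..\<theta> - s + q} (\<lambda>r. f (r, \<theta> - s + q) * K (\<theta>, r)))
     + (if s + \<tau> < q then
          - c (s - q + 1 + \<tau>)
          + integral {s - q + 1 + \<tau>..1} (\<lambda>\<theta>. c \<theta> * K (s - q + 1 + \<tau>, \<theta>))
        else 0)"

definition Kop :: "real \<Rightarrow> (real \<times> real \<Rightarrow> real) \<Rightarrow> (real \<Rightarrow> real) \<Rightarrow> (real \<times> real \<Rightarrow> real)" where
  "Kop \<tau> f c = (THE K. continuous_on T1 K \<and>
       (\<forall>s q. (s, q) \<in> T1 \<longrightarrow> K (s, q) = Krhs \<tau> f c K s q) \<and>
       (\<forall>x. x \<notin> T1 \<longrightarrow> K x = 0))"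

definition Jop :: "real \<Rightarrow> (real \<times> real \<Rightarrow> real) \<Rightarrow> (real \<Rightarrow> real) \<Rightarrow> real \<Rightarrow> real" where
  "Jop \<tau> f c \<sigma> =
     (if \<sigma> < 1 then integral {\<sigma>..1} (\<lambda>q. Kop \<tau> f c (\<sigma>, q) * c q) - c \<sigma> else 0)"

definition Lop :: "real \<Rightarrow> real \<Rightarrow> (real \<times> real \<Rightarrow> real) \<Rightarrow> (real \<Rightarrow> real) \<Rightarrow> real \<Rightarrow> real" where
  "Lop \<tau> \<eta> f c \<phi> = (if \<phi> < 1 then Jop \<tau> f c (\<phi> + \<eta>) else 0)"

end

theory Submission
  imports Defs
begin

text \<open>The kernel equation is a fixed-point problem K = \<Phi>(K) for an affine integral operator \<Phi>
  depending on (\<tau>, f, c). In the sup norm weighted by exp(4M(q - s)) the linear part of \<Phi> is a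
  contraction with constant 1/2, uniformly in data bounded by M. This yields existence, uniqueness,
  the bound 4M e^{4M} on K, and a stability estimate: a continuous kernel solving the equation up to
  a defect a lies within 2a e^{4M} of the solution. Perturbing f and c by \<delta> perturbs \<Phi> by O(\<delta>).
  The delay enters only through the boundary term J_K(s - q + 1 + \<tau>), so J must be Lipschitz; this
  follows from Lipschitz continuity of K in its first variable, obtained by running the same
  contraction argument on K(s + h, q) - K(s, q), where the C^1 bounds on f and c are used.\<close>

lemma abs_integral_le_integral:
  fixes g h :: "real \<Rightarrow> real"
  assumes "h integrable_on {a..b}" "\<And>x. x \<in> {a..b} \<Longrightarrow> \<bar>g x\<bar> \<le> h x"
  shows "\<bar>integral {a..b} g\<bar> \<le> integral {a..b} h"
proof (cases "g integrable_on {a..b}")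
  case True
  then show ?thesis using integral_norm_bound_integral[OF True assms(1)] assms(2) by auto
next
  case False
  have "0 \<le> integral {a..b} h"
    using assms by (intro integral_nonneg) (auto intro: order_trans[OF abs_ge_zero])
  with False show ?thesis by (simp add: not_integrable_integral)
qed

lemma abs_integral_le_const:
  fixes g :: "real \<Rightarrow> real"
  assumes "a \<le> b" "\<And>x. x \<in> {a..b} \<Longrightarrow> \<bar>g x\<bar> \<le> B"
  shows "\<bar>integral {a..b} g\<bar> \<le> B * (b - a)"
  using abs_integral_le_integral[of "\<lambda>_. B" a b g] assms by (auto simp: mult.commute)

lemma abs_integral_le_exp_weight:
  fixes g :: "real \<Rightarrow> real"
  assumes l: "l > 0" and W: "W \<ge> 0" and A: "A \<ge> 0" and ab: "a \<le> b"
    and g: "\<And>x. x \<in> {a..b} \<Longrightarrow> \<bar>g x\<bar> \<le> A + W * exp (l * (x - t))"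
  shows "\<bar>integral {a..b} g\<bar> \<le> A * (b - a) + W * exp (l * (b - t)) / l"
proof -
  have "((\<lambda>x. exp (l * (x - t))) has_integral (exp (l * (b - t)) / l - exp (l * (a - t)) / l)) {a..b}"
    using l by (intro fundamental_theorem_of_calculus[OF ab])
      (auto intro!: derivative_eq_intros simp: has_real_derivative_iff_has_vector_derivative[symmetric])
  from has_integral_add[OF has_integral_const_real[of A a b] has_integral_mult_right[OF this, of W]]
  have int: "((\<lambda>x. A + W * exp (l * (x - t))) has_integral
      (A * (b - a) + W * (exp (l * (b - t)) / l - exp (l * (a - t)) / l))) {a..b}"
    using ab by (simp add: mult.commute)
  have "\<bar>integral {a..b} g\<bar> \<le> integral {a..b} (\<lambda>x. A + W * exp (l * (x - t)))"
    by (rule abs_integral_le_integral) (use int g in auto)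
  also have "\<dots> = A * (b - a) + W * (exp (l * (b - t)) / l - exp (l * (a - t)) / l)"
    using int by (rule integral_unique)
  also have "\<dots> \<le> A * (b - a) + W * exp (l * (b - t)) / l"
    using W l by (simp add: divide_simps mult_left_mono)
  finally show ?thesis .
qed

lemma integral_rescale_unit_interval:
  fixes g :: "real \<Rightarrow> real"
  assumes "L \<ge> 0"
  shows "integral {a..a + L} g = L * integral {0..1} (\<lambda>u. g (a + L * u))"
proof (cases "L = 0")
  case False
  with assms have L: "L > 0" by simp
  have iff: "((\<lambda>u. g (L *\<^sub>R u + a)) has_integral (I /\<^sub>R L ^ DIM(real))) {0..1} \<longleftrightarrow>
        (g has_integral I) {a..a + L}" for I
    using has_integral_affinity_iff[OF L, of g a I a "a + L"] L by simp
  show ?thesis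
  proof (cases "g integrable_on {a..a + L}")
    case True
    then have "((\<lambda>u. g (a + L * u)) has_integral (integral {a..a + L} g / L)) {0..1}"
      using iff by (simp add: add.commute divide_inverse_commute integrable_integral)
    then show ?thesis using L by (simp add: integral_unique)
  next
    case False
    have "\<not> (\<lambda>u. g (a + L * u)) integrable_on {0..1}"
    proof
      assume "(\<lambda>u. g (a + L * u)) integrable_on {0..1}"
      then obtain J where "((\<lambda>u. g (a + L * u)) has_integral J) {0..1}" by auto
      then have "((\<lambda>u. g (L *\<^sub>R u + a)) has_integral ((L * J) /\<^sub>R L ^ DIM(real))) {0..1}"
        using L by (simp add: add.commute field_simps)
      with iff False show False by blast
    qed
    with False show ?thesis by (simp add: not_integrable_integral)
  qed
qed simp

lemma continuous_on_integral_unit_interval: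
  fixes \<phi> :: "'a::topological_space \<times> real \<Rightarrow> real"
  assumes "continuous_on (U \<times> {0..1}) \<phi>"
  shows "continuous_on U (\<lambda>x. integral {0..1} (\<lambda>u. \<phi> (x, u)))"
  using integral_continuous_on_param[of U 0 1 "\<lambda>x u. \<phi> (x, u)"] assms by (simp add: case_prod_beta')

lemma le_if_le_plus_halving:
  fixes y a C :: real
  assumes "\<And>n. y \<le> a + C * (1/2) ^ n"
  shows "y \<le> a"
proof -
  have "(\<lambda>n. a + C * (1/2::real) ^ n) \<longlonglongrightarrow> a + C * 0"
    by (intro tendsto_intros) simp
  then show ?thesis using assms by (intro LIMSEQ_le_const[where X = "\<lambda>n. a + C * (1/2::real) ^ n"]) auto
qed

lemma mem_T1 [simp]: "(s, q) \<in> T1 \<longleftrightarrow> 0 \<le> s \<and> s \<le> q \<and> q \<le> 1"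
  by (simp add: T1_def)

lemma convex_T1: "convex T1"
  unfolding convex_def
proof (intro ballI allI impI)
  fix x y :: "real \<times> real" and u v :: real
  assume xy: "x \<in> T1" "y \<in> T1" and uv: "0 \<le> u" "0 \<le> v" "u + v = 1"
  obtain s q s' q' where e: "x = (s,q)" "y = (s',q')" by (cases x, cases y)
  have h: "0 \<le> s" "s \<le> q" "q \<le> 1" "0 \<le> s'" "s' \<le> q'" "q' \<le> 1"
    using xy e by auto
  have a: "u * s \<le> u * q" "v * s' \<le> v * q'" "u * q \<le> u" "v * q' \<le> v" "0 \<le> u * s" "0 \<le> v * s'"
    using h uv by (auto intro: mult_left_mono simp: mult_left_le)
  show "u *\<^sub>R x + v *\<^sub>R y \<in> T1"
    using a uv e by auto
qed

lemma compact_T1: "compact T1"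
proof -
  have "T1 = ({0..1} \<times> {0..1}) \<inter> {x. fst x \<le> snd x}" by auto
  also have "compact \<dots>"
    by (intro compact_Int_closed compact_Times compact_Icc closed_Collect_le continuous_intros)
  finally show ?thesis .
qed

lemma C1_T1_bounded_lipschitz_fst:
  assumes "C1_T1_bounded f M" "(a, y) \<in> T1" "(b, y) \<in> T1"
  shows "\<bar>f (a, y) - f (b, y)\<bar> \<le> 2 * M * \<bar>a - b\<bar>"
proof -
  obtain fs fq where d: "\<And>x. x \<in> T1 \<Longrightarrow> (f has_derivative (\<lambda>(h, k). fs x * h + fq x * k)) (at x within T1)"
    and bd: "\<And>x. x \<in> T1 \<Longrightarrow> \<bar>fs x\<bar> \<le> M \<and> \<bar>fq x\<bar> \<le> M"
    using assms(1) unfolding C1_T1_bounded_def by blast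
  have "norm (f (a, y) - f (b, y)) \<le> (2 * M) * norm ((a, y) - (b, y))"
  proof (rule differentiable_bound[OF convex_T1 d])
    show "onorm (\<lambda>(h, k). fs x * h + fq x * k) \<le> 2 * M" if x: "x \<in> T1" for x
    proof (rule onorm_le)
      fix z :: "real \<times> real"
      have "\<bar>fs x * fst z + fq x * snd z\<bar> \<le> \<bar>fs x\<bar> * \<bar>fst z\<bar> + \<bar>fq x\<bar> * \<bar>snd z\<bar>"
        by (rule order_trans[OF abs_triangle_ineq]) (simp add: abs_mult)
      also have "\<dots> \<le> M * norm z + M * norm z"
        using bd[OF x] norm_fst_le[of "fst z" "snd z"] norm_snd_le[of "snd z" "fst z"] by (intro add_mono mult_mono) auto
      finally show "norm ((\<lambda>(h, k). fs x * h + fq x * k) z) \<le> 2 * M * norm z"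
        by (simp add: case_prod_beta)
    qed
  qed (use assms(2,3) in simp_all)
  then show ?thesis by (simp add: norm_Pair)
qed

lemma Cunder_bounded_lipschitz:
  assumes "Cunder_bounded c M" "x \<in> {0..1}" "y \<in> {0..1}"
  shows "\<bar>c x - c y\<bar> \<le> M * \<bar>x - y\<bar>"
proof -
  obtain c' where d: "\<And>x. x \<in> {0..1} \<Longrightarrow> (c has_real_derivative c' x) (at x within {0..1})"
    and bd: "\<And>x. x \<in> {0..1} \<Longrightarrow> \<bar>c' x\<bar> \<le> M"
    using assms(1) unfolding Cunder_bounded_def by blast
  have "norm (c x - c y) \<le> M * norm (x - y)"
  proof (rule differentiable_bound[of "{0..1::real}" c "\<lambda>x. (*) (c' x)"])
    show "(c has_derivative (*) (c' x)) (at x within {0..1})" if "x \<in> {0..1}" for x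
      using d[OF that] by (simp add: has_field_derivative_def)
    show "onorm ((*) (c' x)) \<le> M" if "x \<in> {0..1}" for x
      by (rule onorm_le) (use bd[OF that] in \<open>simp add: abs_mult mult_right_mono\<close>)
  qed (use assms(2,3) in simp_all)
  then show ?thesis by simp
qed

locale kernel_data =
  fixes M :: real and f :: "real \<times> real \<Rightarrow> real" and c :: "real \<Rightarrow> real"
  assumes M_pos: "M > 0"
    and f_cont: "continuous_on T1 f" and f_bound: "p \<in> T1 \<Longrightarrow> \<bar>f p\<bar> \<le> M"
    and c_cont: "continuous_on {0..1} c" and c_bound: "x \<in> {0..1} \<Longrightarrow> \<bar>c x\<bar> \<le> M"
    and c_end: "c 1 = 0"

locale lipschitz_kernel_data = kernel_data +
  assumes f_lipschitz_fst: "(a, y) \<in> T1 \<Longrightarrow> (b, y) \<in> T1 \<Longrightarrow> \<bar>f (a, y) - f (b, y)\<bar> \<le> 2 * M * \<bar>a - b\<bar>"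
    and c_lipschitz: "x \<in> {0..1} \<Longrightarrow> y \<in> {0..1} \<Longrightarrow> \<bar>c x - c y\<bar> \<le> M * \<bar>x - y\<bar>"

lemma lipschitz_kernel_data_if_C1_bounded:
  assumes "M > 0" "C1_T1_bounded f M" "Cunder_bounded c M"
  shows "lipschitz_kernel_data M f c"
proof unfold_locales
  obtain fs fq where "\<And>x. x \<in> T1 \<Longrightarrow> (f has_derivative (\<lambda>(h, k). fs x * h + fq x * k)) (at x within T1)"
    using assms(2) unfolding C1_T1_bounded_def by blast
  then show "continuous_on T1 f" by (rule has_derivative_continuous_on)
  show "continuous_on {0..1} c"
    using assms(3) unfolding Cunder_bounded_def by (blast intro: DERIV_continuous_on)
qed (use assms C1_T1_bounded_lipschitz_fst Cunder_bounded_lipschitz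
      in \<open>auto simp: C1_T1_bounded_def Cunder_bounded_def\<close>)

definition diag_integral :: "(real \<times> real \<Rightarrow> real) \<Rightarrow> real \<Rightarrow> real \<Rightarrow> real" where
  "diag_integral f s q = integral {s..s + 1 - q} (\<lambda>\<theta>. f (\<theta>, \<theta> - s + q))"

definition inner_integral :: "(real \<times> real \<Rightarrow> real) \<Rightarrow> (real \<times> real \<Rightarrow> real) \<Rightarrow> real \<times> real \<Rightarrow> real" where
  "inner_integral f K p = integral {fst p..fst p + snd p} (\<lambda>r. f (r, fst p + snd p) * K (fst p, r))"

definition volterra_term :: "(real \<times> real \<Rightarrow> real) \<Rightarrow> (real \<times> real \<Rightarrow> real) \<Rightarrow> real \<Rightarrow> real \<Rightarrow> real" where
  "volterra_term f K s q = integral {s..s + 1 - q} (\<lambda>\<theta>. inner_integral f K (\<theta>, q - s))"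

definition boundary_integral :: "(real \<Rightarrow> real) \<Rightarrow> (real \<times> real \<Rightarrow> real) \<Rightarrow> real \<Rightarrow> real" where
  "boundary_integral c K x = integral {x..1} (\<lambda>\<theta>. c \<theta> * K (x, \<theta>))"

definition Jmap :: "(real \<Rightarrow> real) \<Rightarrow> (real \<times> real \<Rightarrow> real) \<Rightarrow> real \<Rightarrow> real" where
  "Jmap c K x = (if x < 1 then boundary_integral c K x - c x else 0)"

lemma Krhs_decompose:
  "Krhs \<tau> f c K s q = Jmap c K (s - q + 1 + \<tau>) - diag_integral f s q + volterra_term f K s q"
  unfolding Krhs_def Jmap_def diag_integral_def volterra_term_def boundary_integral_def inner_integral_def
  by (simp add: algebra_simps)

lemma Jop_eq_Jmap: "Jop \<tau> f c = Jmap c (Kop \<tau> f c)"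
  unfolding Jop_def Jmap_def boundary_integral_def by (simp add: fun_eq_iff mult.commute)

text \<open>T1 in the coordinates (s, q - s) in which inner_integral is parametrised.\<close>
definition Delta :: "(real \<times> real) set" where
  "Delta = {(t, w). 0 \<le> t \<and> 0 \<le> w \<and> t + w \<le> 1}"

lemma unit_interval_mult_bounds:
  fixes w u q :: real
  shows "0 \<le> w \<Longrightarrow> u \<le> 1 \<Longrightarrow> w * u \<le> w"
    and "0 \<le> w \<Longrightarrow> 0 \<le> u \<Longrightarrow> 0 \<le> w * u"
    and "q \<le> 1 \<Longrightarrow> 0 \<le> u \<Longrightarrow> u \<le> 1 \<Longrightarrow> (1 - q) * u + q \<le> 1"
    and "q \<le> 1 \<Longrightarrow> 0 \<le> u \<Longrightarrow> u \<le> 1 \<Longrightarrow> q + (1 - q) * u \<le> 1"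
proof -
  show "0 \<le> w \<Longrightarrow> u \<le> 1 \<Longrightarrow> w * u \<le> w" by (simp add: mult_left_le)
  show "0 \<le> w \<Longrightarrow> 0 \<le> u \<Longrightarrow> 0 \<le> w * u" by simp
  show "(1 - q) * u + q \<le> 1" "q + (1 - q) * u \<le> 1" if "q \<le> 1" "0 \<le> u" "u \<le> 1"
    using mult_left_le[of u "1 - q"] that by linarith+
qed

lemma inner_integral_continuous:
  assumes f: "continuous_on T1 f" and K: "continuous_on T1 K"
  shows "continuous_on Delta (inner_integral f K)"
proof -
  have eq: "inner_integral f K p = snd p * integral {0..1} (\<lambda>u. f (fst p + snd p * u, fst p + snd p) * K (fst p, fst p + snd p * u))"
    if "p \<in> Delta" for p
    using that unfolding inner_integral_def Delta_def by (subst integral_rescale_unit_interval) auto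
  have c1: "continuous_on (Delta \<times> {0..1}) (\<lambda>x. f (fst (fst x) + snd (fst x) * snd x, fst (fst x) + snd (fst x)))"
    by (rule continuous_on_compose2[OF f]) (auto intro!: continuous_intros simp: Delta_def
        intro: unit_interval_mult_bounds order_trans[OF add_left_mono[OF unit_interval_mult_bounds(1)]])
  have c2: "continuous_on (Delta \<times> {0..1}) (\<lambda>x. K (fst (fst x), fst (fst x) + snd (fst x) * snd x))"
    by (rule continuous_on_compose2[OF K]) (auto intro!: continuous_intros simp: Delta_def
        intro: unit_interval_mult_bounds order_trans[OF add_left_mono[OF unit_interval_mult_bounds(1)]])
  have "continuous_on Delta (\<lambda>p. snd p * integral {0..1} (\<lambda>u. f (fst p + snd p * u, fst p + snd p) * K (fst p, fst p + snd p * u)))"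
    by (intro continuous_intros continuous_on_integral_unit_interval[where \<phi> = "\<lambda>x. f (fst (fst x) + snd (fst x) * snd x, fst (fst x) + snd (fst x)) * K (fst (fst x), fst (fst x) + snd (fst x) * snd x)", simplified]
        continuous_on_mult c1 c2)
  then show ?thesis by (rule continuous_on_eq) (simp add: eq)
qed

lemma volterra_term_continuous:
  assumes f: "continuous_on T1 f" and K: "continuous_on T1 K"
  shows "continuous_on T1 (\<lambda>p. volterra_term f K (fst p) (snd p))"
proof -
  have eq: "volterra_term f K (fst p) (snd p)
      = (1 - snd p) * integral {0..1} (\<lambda>u. inner_integral f K (fst p + (1 - snd p) * u, snd p - fst p))"
    if "p \<in> T1" for p
    using that unfolding volterra_term_def
    by (subst integral_rescale_unit_interval[symmetric]) (auto simp: T1_def algebra_simps)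
  have c1: "continuous_on (T1 \<times> {0..1}) (\<lambda>x. inner_integral f K (fst (fst x) + (1 - snd (fst x)) * snd x, snd (fst x) - fst (fst x)))"
    by (rule continuous_on_compose2[OF inner_integral_continuous[OF f K]]) (auto intro!: continuous_intros simp: Delta_def T1_def
        intro: unit_interval_mult_bounds order_trans[OF add_left_mono[OF unit_interval_mult_bounds(1)]])
  have "continuous_on T1 (\<lambda>p. (1 - snd p) * integral {0..1} (\<lambda>u. inner_integral f K (fst p + (1 - snd p) * u, snd p - fst p)))"
    by (intro continuous_intros continuous_on_integral_unit_interval[where \<phi> = "\<lambda>x. inner_integral f K (fst (fst x) + (1 - snd (fst x)) * snd x, snd (fst x) - fst (fst x))", simplified] c1)
  then show ?thesis by (rule continuous_on_eq) (simp add: eq)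
qed

lemma diag_integral_continuous:
  assumes f: "continuous_on T1 f"
  shows "continuous_on T1 (\<lambda>p. diag_integral f (fst p) (snd p))"
proof -
  have eq: "diag_integral f (fst p) (snd p)
      = (1 - snd p) * integral {0..1} (\<lambda>u. f (fst p + (1 - snd p) * u, snd p + (1 - snd p) * u))"
    if "p \<in> T1" for p
  proof -
    have "diag_integral f (fst p) (snd p) = integral {fst p..fst p + (1 - snd p)} (\<lambda>\<theta>. f (\<theta>, \<theta> - fst p + snd p))"
      unfolding diag_integral_def by (simp add: algebra_simps)
    also have "\<dots> = (1 - snd p) * integral {0..1} (\<lambda>u. f (fst p + (1 - snd p) * u, snd p + (1 - snd p) * u))"
      using that by (subst integral_rescale_unit_interval) (auto simp: T1_def algebra_simps)
    finally show ?thesis .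
  qed
  have c1: "continuous_on (T1 \<times> {0..1}) (\<lambda>x. f (fst (fst x) + (1 - snd (fst x)) * snd x, snd (fst x) + (1 - snd (fst x)) * snd x))"
    by (rule continuous_on_compose2[OF f]) (auto intro!: continuous_intros simp: T1_def
        intro: unit_interval_mult_bounds order_trans[OF add_left_mono[OF unit_interval_mult_bounds(1)]])
  have "continuous_on T1 (\<lambda>p. (1 - snd p) * integral {0..1} (\<lambda>u. f (fst p + (1 - snd p) * u, snd p + (1 - snd p) * u)))"
    by (intro continuous_intros continuous_on_integral_unit_interval[where \<phi> = "\<lambda>x. f (fst (fst x) + (1 - snd (fst x)) * snd x, snd (fst x) + (1 - snd (fst x)) * snd x)", simplified] c1)
  then show ?thesis by (rule continuous_on_eq) (simp add: eq)
qed

lemma boundary_integral_continuous: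
  assumes c: "continuous_on {0..1} c" and K: "continuous_on T1 K"
  shows "continuous_on {0..1} (boundary_integral c K)"
proof -
  have eq: "boundary_integral c K x = (1 - x) * integral {0..1} (\<lambda>u. c (x + (1 - x) * u) * K (x, x + (1 - x) * u))"
    if "x \<in> {0..1}" for x
    using that unfolding boundary_integral_def by (subst integral_rescale_unit_interval[symmetric]) auto
  have c1: "continuous_on ({0..1} \<times> {0..1}) (\<lambda>x. c (fst x + (1 - fst x) * snd x))"
    by (rule continuous_on_compose2[OF c]) (auto intro!: continuous_intros
        intro: unit_interval_mult_bounds order_trans[OF add_left_mono[OF unit_interval_mult_bounds(1)]])
  have c2: "continuous_on ({0..1} \<times> {0..1}) (\<lambda>x. K (fst x, fst x + (1 - fst x) * snd x))"
    by (rule continuous_on_compose2[OF K]) (auto intro!: continuous_intros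
        intro: unit_interval_mult_bounds order_trans[OF add_left_mono[OF unit_interval_mult_bounds(1)]])
  have "continuous_on {0..1} (\<lambda>x. (1 - x) * integral {0..1} (\<lambda>u. c (x + (1 - x) * u) * K (x, x + (1 - x) * u)))"
    by (intro continuous_intros continuous_on_integral_unit_interval[where \<phi> = "\<lambda>x. c (fst x + (1 - fst x) * snd x) * K (fst x, fst x + (1 - fst x) * snd x)", simplified]
        continuous_on_mult c1 c2)
  then show ?thesis by (rule continuous_on_eq) (simp add: eq)
qed

lemma Jmap_continuous:
  assumes c: "continuous_on {0..1} c" and c1: "c 1 = 0" and K: "continuous_on T1 K"
  shows "continuous_on {0..} (Jmap c K)"
proof -
  have "continuous_on {0..} (\<lambda>x. if x \<le> 1 then boundary_integral c K x - c x else 0)"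
  proof (rule continuous_on_cases_le[where h = "\<lambda>x. x"])
    show "continuous_on {x \<in> {0..}. x \<le> 1} (\<lambda>x. boundary_integral c K x - c x)"
      using continuous_on_diff[OF boundary_integral_continuous[OF c K] c]
      by (rule continuous_on_subset) auto
  qed (auto simp: c1 boundary_integral_def intro: continuous_intros)
  then show ?thesis
    by (rule continuous_on_eq) (auto simp: Jmap_def c1 boundary_integral_def)
qed

lemma Krhs_continuous:
  assumes f: "continuous_on T1 f" and K: "continuous_on T1 K" and c: "continuous_on {0..1} c"
    and c1: "c 1 = 0" and tau: "\<tau> \<ge> 0"
  shows "continuous_on T1 (\<lambda>p. Krhs \<tau> f c K (fst p) (snd p))"
proof -
  have "continuous_on T1 (\<lambda>p. Jmap c K (fst p - snd p + 1 + \<tau>))"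
    by (rule continuous_on_compose2[OF Jmap_continuous[OF c c1 K]]) (use tau in \<open>auto intro!: continuous_intros\<close>)
  then show ?thesis
    unfolding Krhs_decompose
    by (intro continuous_on_add continuous_on_diff diag_integral_continuous[OF f] volterra_term_continuous[OF f K])
qed

lemma inner_integral_integrable:
  assumes f: "continuous_on T1 f" and K: "continuous_on T1 K" and sq: "(s, q) \<in> T1"
    and ab: "s \<le> a" "b \<le> s + 1 - q"
  shows "(\<lambda>\<theta>. inner_integral f K (\<theta>, q - s)) integrable_on {a..b}"
  by (rule integrable_continuous_interval, rule continuous_on_compose2[OF inner_integral_continuous[OF f K]])
    (use sq ab in \<open>auto intro!: continuous_intros simp: Delta_def\<close>)

lemma product_integrable:
  fixes f K :: "real \<times> real \<Rightarrow> real"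
  assumes f: "continuous_on T1 f" and K: "continuous_on T1 K"
    and h: "0 \<le> \<theta>" "\<theta> \<le> a" "b \<le> y" "y \<le> 1"
  shows "(\<lambda>r. f (r, y) * K (\<theta>, r)) integrable_on {a..b}"
proof -
  have "continuous_on {a..b} (\<lambda>r. f (r, y))"
    by (rule continuous_on_compose2[OF f, of _ "\<lambda>r. (r, y)"]) (use h in \<open>auto intro!: continuous_intros\<close>)
  moreover have "continuous_on {a..b} (\<lambda>r. K (\<theta>, r))"
    by (rule continuous_on_compose2[OF K, of _ "\<lambda>r. (\<theta>, r)"]) (use h in \<open>auto intro!: continuous_intros\<close>)
  ultimately have "continuous_on {a..b} (\<lambda>r. f (r, y) * K (\<theta>, r))" by (rule continuous_on_mult)
  then show ?thesis by (rule integrable_continuous_interval)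
qed

lemma boundary_integrand_integrable:
  fixes c :: "real \<Rightarrow> real" and K :: "real \<times> real \<Rightarrow> real"
  assumes c: "continuous_on {0..1} c" and K: "continuous_on T1 K" and h: "0 \<le> x" "x \<le> a" "b \<le> 1"
  shows "(\<lambda>\<theta>. c \<theta> * K (x, \<theta>)) integrable_on {a..b}"
proof -
  have "continuous_on {a..b} c"
    by (rule continuous_on_subset[OF c]) (use h in auto)
  moreover have "continuous_on {a..b} (\<lambda>\<theta>. K (x, \<theta>))"
    by (rule continuous_on_compose2[OF K, of _ "\<lambda>\<theta>. (x, \<theta>)"]) (use h in \<open>auto intro!: continuous_intros\<close>)
  ultimately have "continuous_on {a..b} (\<lambda>\<theta>. c \<theta> * K (x, \<theta>))" by (rule continuous_on_mult)
  then show ?thesis by (rule integrable_continuous_interval)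
qed

lemma diag_integrand_integrable:
  fixes f :: "real \<times> real \<Rightarrow> real"
  assumes f: "continuous_on T1 f" and sq: "(s, q) \<in> T1" and h: "h \<ge> 0" "s + h \<le> q"
  shows "(\<lambda>\<theta>. f (\<theta> + h, \<theta> - s + q)) integrable_on {s..s + 1 - q}"
proof -
  have "continuous_on {s..s + 1 - q} (\<lambda>\<theta>. f (\<theta> + h, \<theta> - s + q))"
    by (rule continuous_on_compose2[OF f, of _ "\<lambda>\<theta>. (\<theta> + h, \<theta> - s + q)"])
      (use sq h in \<open>auto intro!: continuous_intros\<close>)
  then show ?thesis by (rule integrable_continuous_interval)
qed

lemma inner_integral_eq:
  "inner_integral f K (\<theta>, q - s) = integral {\<theta>..\<theta> - s + q} (\<lambda>r. f (r, \<theta> - s + q) * K (\<theta>, r))"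
  by (simp add: inner_integral_def algebra_simps)

lemma volterra_term_diff:
  fixes f1 f2 K1 K2 :: "real \<times> real \<Rightarrow> real"
  assumes "continuous_on T1 f1" "continuous_on T1 f2" "continuous_on T1 K1" "continuous_on T1 K2"
    and sq: "(s, q) \<in> T1"
  shows "volterra_term f1 K1 s q - volterra_term f2 K2 s q = integral {s..s + 1 - q} (\<lambda>\<theta>. integral {\<theta>..\<theta> - s + q}
            (\<lambda>r. f1 (r, \<theta> - s + q) * K1 (\<theta>, r) - f2 (r, \<theta> - s + q) * K2 (\<theta>, r)))"
proof -
  have "volterra_term f1 K1 s q - volterra_term f2 K2 s q
      = integral {s..s + 1 - q} (\<lambda>\<theta>. inner_integral f1 K1 (\<theta>, q - s) - inner_integral f2 K2 (\<theta>, q - s))"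
    unfolding volterra_term_def using assms by (intro integral_diff[symmetric] inner_integral_integrable) auto
  also have "\<dots> = integral {s..s + 1 - q} (\<lambda>\<theta>. integral {\<theta>..\<theta> - s + q}
            (\<lambda>r. f1 (r, \<theta> - s + q) * K1 (\<theta>, r) - f2 (r, \<theta> - s + q) * K2 (\<theta>, r)))"
    unfolding inner_integral_eq using assms
    by (intro integral_cong integral_diff[symmetric] product_integrable) auto
  finally show ?thesis .
qed

lemma boundary_integral_diff:
  fixes K1 K2 :: "real \<times> real \<Rightarrow> real" and c1 c2 :: "real \<Rightarrow> real"
  assumes "continuous_on {0..1} c1" "continuous_on {0..1} c2" "continuous_on T1 K1" "continuous_on T1 K2"
    and "0 \<le> x"
  shows "boundary_integral c1 K1 x - boundary_integral c2 K2 x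
    = integral {x..1} (\<lambda>\<theta>. c1 \<theta> * K1 (x, \<theta>) - c2 \<theta> * K2 (x, \<theta>))"
  unfolding boundary_integral_def using assms
  by (intro integral_diff[symmetric] boundary_integrand_integrable) auto

lemma diag_integral_diff:
  fixes f1 f2 :: "real \<times> real \<Rightarrow> real"
  assumes "continuous_on T1 f1" "continuous_on T1 f2" and sq: "(s, q) \<in> T1"
  shows "diag_integral f1 s q - diag_integral f2 s q
    = integral {s..s + 1 - q} (\<lambda>\<theta>. f1 (\<theta>, \<theta> - s + q) - f2 (\<theta>, \<theta> - s + q))"
  unfolding diag_integral_def using assms diag_integrand_integrable[where h = 0]
  by (intro integral_diff[symmetric]) auto

lemma abs_double_integral_le_exp_weight:
  fixes \<phi> :: "real \<Rightarrow> real \<Rightarrow> real"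
  assumes sq: "(s, q) \<in> T1" and l: "l > 0" and A: "A \<ge> 0" and W: "W \<ge> 0"
    and b: "\<And>\<theta> r. s \<le> \<theta> \<Longrightarrow> \<theta> \<le> s + 1 - q \<Longrightarrow> \<theta> \<le> r \<Longrightarrow> r \<le> \<theta> - s + q \<Longrightarrow>
       \<bar>\<phi> \<theta> r\<bar> \<le> A + W * exp (l * (r - \<theta>))"
  shows "\<bar>integral {s..s + 1 - q} (\<lambda>\<theta>. integral {\<theta>..\<theta> - s + q} (\<phi> \<theta>))\<bar>
          \<le> A + W * exp (l * (q - s)) / l"
proof -
  let ?B = "A + W * exp (l * (q - s)) / l"
  have inner: "\<bar>integral {\<theta>..\<theta> - s + q} (\<phi> \<theta>)\<bar> \<le> ?B" if th: "\<theta> \<in> {s..s + 1 - q}" for \<theta>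
  proof -
    have "\<bar>integral {\<theta>..\<theta> - s + q} (\<phi> \<theta>)\<bar> \<le> A * (q - s) + W * exp (l * (\<theta> - s + q - \<theta>)) / l"
      using abs_integral_le_exp_weight[OF l W A, of \<theta> "\<theta> - s + q" "\<phi> \<theta>" \<theta>] b th sq by auto
    also have "A * (q - s) \<le> A" using A sq by (simp add: mult_left_le)
    finally show ?thesis by simp
  qed
  have "\<bar>integral {s..s + 1 - q} (\<lambda>\<theta>. integral {\<theta>..\<theta> - s + q} (\<phi> \<theta>))\<bar> \<le> ?B * (s + 1 - q - s)"
    by (rule abs_integral_le_const) (use sq inner in auto)
  also have "\<dots> \<le> ?B"
    using sq A W l by (simp add: mult_left_le)
  finally show ?thesis .
qed

lemma weighted_bound_by_halving:
  fixes D :: "real \<times> real \<Rightarrow> real"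
  assumes l: "l \<ge> 0" and a: "a \<ge> 0" and A: "\<And>x. x \<in> A \<Longrightarrow> fst x \<le> snd x"
    and B: "\<And>x. x \<in> A \<Longrightarrow> \<bar>D x\<bar> \<le> B"
    and step: "\<And>W. W \<ge> 0 \<Longrightarrow> (\<forall>x\<in>A. \<bar>D x\<bar> \<le> W * exp (l * (snd x - fst x))) \<Longrightarrow>
                   (\<forall>x\<in>A. \<bar>D x\<bar> \<le> (a + W / 2) * exp (l * (snd x - fst x)))"
    and x: "x \<in> A"
  shows "\<bar>D x\<bar> \<le> 2 * a * exp (l * (snd x - fst x))"
proof -
  define B' where "B' = max B 0"
  have ind: "\<forall>x\<in>A. \<bar>D x\<bar> \<le> (2 * a + B' * (1/2) ^ n) * exp (l * (snd x - fst x))" for n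
  proof (induction n)
    case 0
    show ?case
    proof
      fix x assume x: "x \<in> A"
      have "\<bar>D x\<bar> \<le> (2 * a + B') * 1" using B[OF x] a by (simp add: B'_def)
      also have "\<dots> \<le> (2 * a + B') * exp (l * (snd x - fst x))"
        using A[OF x] l a by (intro mult_left_mono) (auto simp: B'_def)
      finally show "\<bar>D x\<bar> \<le> (2 * a + B' * (1 / 2) ^ 0) * exp (l * (snd x - fst x))" by simp
    qed
  next
    case (Suc n)
    have "\<forall>x\<in>A. \<bar>D x\<bar> \<le> (a + (2 * a + B' * (1/2) ^ n) / 2) * exp (l * (snd x - fst x))"
      by (rule step) (use Suc a in \<open>auto simp: B'_def\<close>)
    then show ?case by (simp add: field_simps)
  qed
  have "\<bar>D x\<bar> / exp (l * (snd x - fst x)) \<le> 2 * a"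
    by (rule le_if_le_plus_halving[where C = B']) (use ind x in \<open>simp add: divide_le_eq\<close>)
  then show ?thesis by (simp add: divide_le_eq)
qed

lemma abs_mult_le: "\<bar>a\<bar> \<le> M \<Longrightarrow> \<bar>b\<bar> \<le> W \<Longrightarrow> \<bar>a * (b::real)\<bar> \<le> M * W"
  by (simp add: abs_mult mult_mono')

lemma exp_weight_ge_1: "M > 0 \<Longrightarrow> x \<in> T1 \<Longrightarrow> 1 \<le> exp (4 * M * (snd x - fst x))"
  by (cases x) simp

lemma exp_weight_le: "M > 0 \<Longrightarrow> x \<in> T1 \<Longrightarrow> exp (4 * M * (snd x - fst x)) \<le> exp (4 * M)"
  by (cases x) simp

context kernel_data
begin

lemma diag_integral_bound:
  assumes "(s, q) \<in> T1"
  shows "\<bar>diag_integral f s q\<bar> \<le> M"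
proof -
  have "\<bar>diag_integral f s q\<bar> \<le> M * (s + 1 - q - s)"
    unfolding diag_integral_def by (rule abs_integral_le_const) (use assms f_bound in auto)
  also have "\<dots> \<le> M" using assms M_pos by (simp add: mult_left_le)
  finally show ?thesis .
qed

lemma Krhs_zero_bound:
  assumes "\<tau> \<ge> 0" "(s, q) \<in> T1"
  shows "\<bar>Krhs \<tau> f c (\<lambda>_. 0) s q\<bar> \<le> 2 * M"
proof -
  have "\<bar>Jmap c (\<lambda>_. 0) (s - q + 1 + \<tau>)\<bar> \<le> M"
    using assms c_bound[of "s - q + 1 + \<tau>"] M_pos by (auto simp: Jmap_def boundary_integral_def)
  moreover have "volterra_term f (\<lambda>_. 0) s q = 0"
    by (simp add: volterra_term_def inner_integral_def)
  ultimately show ?thesis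
    using diag_integral_bound[OF assms(2)] unfolding Krhs_decompose by linarith
qed

text \<open>With the weight exp(4M(q - s)), each of the two integral operators in the equation gains a factor
  M/(4M); this is why 4M is the right exponent.\<close>
lemma Krhs_contraction:
  fixes K1 K2 :: "real \<times> real \<Rightarrow> real"
  assumes tau: "\<tau> \<ge> 0" and K1: "continuous_on T1 K1" and K2: "continuous_on T1 K2"
    and W: "W \<ge> 0" and D: "\<forall>x\<in>T1. \<bar>K1 x - K2 x\<bar> \<le> W * exp (4 * M * (snd x - fst x))"
    and sq: "(s, q) \<in> T1"
  shows "\<bar>Krhs \<tau> f c K1 s q - Krhs \<tau> f c K2 s q\<bar> \<le> W / 2 * exp (4 * M * (q - s))"
proof -
  have l: "4 * M > 0" using M_pos by simp
  have "\<bar>volterra_term f K1 s q - volterra_term f K2 s q\<bar> \<le> 0 + (M * W) * exp (4 * M * (q - s)) / (4 * M)"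
    unfolding volterra_term_diff[OF f_cont f_cont K1 K2 sq]
  proof (rule abs_double_integral_le_exp_weight[OF sq l order_refl])
    fix \<theta> r assume h: "s \<le> \<theta>" "\<theta> \<le> s + 1 - q" "\<theta> \<le> r" "r \<le> \<theta> - s + q"
    have "\<bar>f (r, \<theta> - s + q) * (K1 (\<theta>, r) - K2 (\<theta>, r))\<bar> \<le> M * (W * exp (4 * M * (r - \<theta>)))"
      by (rule abs_mult_le) (use f_bound D[rule_format, of "(\<theta>, r)"] h sq in auto)
    then show "\<bar>f (r, \<theta> - s + q) * K1 (\<theta>, r) - f (r, \<theta> - s + q) * K2 (\<theta>, r)\<bar>
        \<le> 0 + M * W * exp (4 * M * (r - \<theta>))" by (simp add: algebra_simps)
  qed (use M_pos W in auto)
  then have v: "\<bar>volterra_term f K1 s q - volterra_term f K2 s q\<bar> \<le> W / 4 * exp (4 * M * (q - s))"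
    using M_pos by simp
  have j: "\<bar>Jmap c K1 x - Jmap c K2 x\<bar> \<le> W / 4 * exp (4 * M * (q - s))" if x: "x = s - q + 1 + \<tau>" for x
  proof (cases "x < 1")
    case True
    have x0: "0 \<le> x" using x sq tau by auto
    have "\<bar>boundary_integral c K1 x - boundary_integral c K2 x\<bar> \<le> 0 * (1 - x) + (M * W) * exp (4 * M * (1 - x)) / (4 * M)"
      unfolding boundary_integral_diff[OF c_cont c_cont K1 K2 x0]
    proof (rule abs_integral_le_exp_weight[OF l _ order_refl])
      fix \<theta> assume h: "\<theta> \<in> {x..1}"
      have "\<bar>c \<theta> * (K1 (x, \<theta>) - K2 (x, \<theta>))\<bar> \<le> M * (W * exp (4 * M * (\<theta> - x)))"
        by (rule abs_mult_le) (use c_bound D[rule_format, of "(x, \<theta>)"] h x0 in auto)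
      then show "\<bar>c \<theta> * K1 (x, \<theta>) - c \<theta> * K2 (x, \<theta>)\<bar> \<le> 0 + M * W * exp (4 * M * (\<theta> - x))"
        by (simp add: algebra_simps)
    qed (use M_pos W True in auto)
    also have "\<dots> \<le> (M * W) * exp (4 * M * (q - s)) / (4 * M)"
      using M_pos W x tau by (auto intro!: divide_right_mono mult_left_mono)
    finally show ?thesis using True M_pos by (simp add: Jmap_def)
  qed (use W in \<open>simp add: Jmap_def\<close>)
  have "Krhs \<tau> f c K1 s q - Krhs \<tau> f c K2 s q
      = (Jmap c K1 (s - q + 1 + \<tau>) - Jmap c K2 (s - q + 1 + \<tau>)) + (volterra_term f K1 s q - volterra_term f K2 s q)"
    unfolding Krhs_decompose by simp
  then have "\<bar>Krhs \<tau> f c K1 s q - Krhs \<tau> f c K2 s q\<bar>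
      \<le> \<bar>Jmap c K1 (s - q + 1 + \<tau>) - Jmap c K2 (s - q + 1 + \<tau>)\<bar> + \<bar>volterra_term f K1 s q - volterra_term f K2 s q\<bar>"
    by (metis abs_triangle_ineq)
  with v j[OF refl] show ?thesis by linarith
qed

end

definition is_kernel :: "real \<Rightarrow> (real \<times> real \<Rightarrow> real) \<Rightarrow> (real \<Rightarrow> real) \<Rightarrow> (real \<times> real \<Rightarrow> real) \<Rightarrow> bool" where
  "is_kernel \<tau> f c K \<longleftrightarrow> continuous_on T1 K \<and>
       (\<forall>s q. (s, q) \<in> T1 \<longrightarrow> K (s, q) = Krhs \<tau> f c K s q) \<and> (\<forall>x. x \<notin> T1 \<longrightarrow> K x = 0)"

primrec picard :: "real \<Rightarrow> (real \<times> real \<Rightarrow> real) \<Rightarrow> (real \<Rightarrow> real) \<Rightarrow> nat \<Rightarrow> real \<times> real \<Rightarrow> real" where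
  "picard \<tau> f c 0 = (\<lambda>_. 0)"
| "picard \<tau> f c (Suc n) = (\<lambda>x. if x \<in> T1 then Krhs \<tau> f c (picard \<tau> f c n) (fst x) (snd x) else 0)"

lemma continuous_bounded_on_T1:
  fixes g :: "real \<times> real \<Rightarrow> real"
  assumes "continuous_on T1 g"
  obtains B where "\<And>x. x \<in> T1 \<Longrightarrow> \<bar>g x\<bar> \<le> B"
proof -
  have "bounded (g ` T1)"
    by (rule compact_imp_bounded[OF compact_continuous_image[OF assms compact_T1]])
  then show ?thesis using that by (auto simp: bounded_real)
qed

definition kernel_bound :: "real \<Rightarrow> real" where
  "kernel_bound M = 4 * M * exp (4 * M)"

context kernel_data
begin

lemma picard_continuous:
  assumes "\<tau> \<ge> 0"
  shows "continuous_on T1 (picard \<tau> f c n)"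
proof (induction n)
  case (Suc n)
  show ?case using Krhs_continuous[OF f_cont Suc c_cont c_end assms] by simp
qed (simp add: continuous_on_const)

lemma picard_step_bound:
  assumes tau: "\<tau> \<ge> 0"
  shows "\<forall>x\<in>T1. \<bar>picard \<tau> f c (Suc n) x - picard \<tau> f c n x\<bar> \<le> (2 * M * (1/2) ^ n) * exp (4 * M * (snd x - fst x))"
proof (induction n)
  case 0
  show ?case
  proof
    fix x :: "real \<times> real" assume x: "x \<in> T1"
    have "\<bar>picard \<tau> f c 1 x\<bar> \<le> 2 * M * 1"
      using Krhs_zero_bound[OF tau, of "fst x" "snd x"] x by simp
    also have "\<dots> \<le> 2 * M * exp (4 * M * (snd x - fst x))"
      using exp_weight_ge_1[OF M_pos x] M_pos by (intro mult_left_mono) auto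
    finally show "\<bar>picard \<tau> f c (Suc 0) x - picard \<tau> f c 0 x\<bar> \<le> 2 * M * (1 / 2) ^ 0 * exp (4 * M * (snd x - fst x))"
      by simp
  qed
next
  case (Suc n)
  show ?case
  proof
    fix x :: "real \<times> real" assume x: "x \<in> T1"
    have "\<bar>Krhs \<tau> f c (picard \<tau> f c (Suc n)) (fst x) (snd x) - Krhs \<tau> f c (picard \<tau> f c n) (fst x) (snd x)\<bar>
        \<le> (2 * M * (1/2) ^ n) / 2 * exp (4 * M * (snd x - fst x))"
      using x by (intro Krhs_contraction[OF tau picard_continuous[OF tau] picard_continuous[OF tau] _ Suc])
        (use M_pos in auto)
    then show "\<bar>picard \<tau> f c (Suc (Suc n)) x - picard \<tau> f c (Suc n) x\<bar> \<le> 2 * M * (1 / 2) ^ Suc n * exp (4 * M * (snd x - fst x))"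
      using x by simp
  qed
qed

lemma picard_converges:
  assumes tau: "\<tau> \<ge> 0"
  obtains K where "continuous_on T1 K"
    and "\<And>x n. x \<in> T1 \<Longrightarrow> \<bar>K x - picard \<tau> f c n x\<bar> \<le> 4 * M * exp (4 * M) * (1/2) ^ n"
proof -
  define d where "d i x = picard \<tau> f c (Suc i) x - picard \<tau> f c i x" for i x
  define E where "E = 2 * M * exp (4 * M)"
  have E0: "E \<ge> 0" using M_pos by (simp add: E_def)
  have db: "\<bar>d i x\<bar> \<le> E * (1/2) ^ i" if x: "x \<in> T1" for i x
  proof -
    have "\<bar>d i x\<bar> \<le> (2 * M * (1/2) ^ i) * exp (4 * M * (snd x - fst x))"
      using picard_step_bound[OF tau, of i] x by (simp add: d_def)
    also have "\<dots> \<le> (2 * M * (1/2) ^ i) * exp (4 * M)"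
      by (rule mult_left_mono[OF exp_weight_le[OF M_pos x]]) (use M_pos in simp)
    finally show ?thesis by (simp add: E_def mult_ac)
  qed
  have geometric: "summable (\<lambda>i. E * (1/2::real) ^ i)"
    by (intro summable_mult summable_geometric) simp
  have partial: "(\<Sum>i<n. d i x) = picard \<tau> f c n x" for n x
    unfolding d_def by (subst sum_lessThan_telescope) simp
  have "uniform_limit T1 (\<lambda>n x. \<Sum>i<n. d i x) (\<lambda>x. \<Sum>i. d i x) sequentially"
    by (rule Weierstrass_m_test[OF _ geometric]) (use db in auto)
  then have "continuous_on T1 (\<lambda>x. \<Sum>i. d i x)"
    by (rule uniform_limit_theorem[rotated]) (simp_all add: partial picard_continuous[OF tau])
  moreover have "\<bar>(\<Sum>i. d i x) - picard \<tau> f c n x\<bar> \<le> 4 * M * exp (4 * M) * (1/2) ^ n"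
    if x: "x \<in> T1" for x n
  proof -
    have "summable (\<lambda>i. d i x)"
      by (rule summable_comparison_test[OF _ geometric]) (use db[OF x] in auto)
    from suminf_split_initial_segment[OF this, of n]
    have "(\<Sum>i. d i x) - picard \<tau> f c n x = (\<Sum>i. d (i + n) x)" by (simp add: partial)
    also have "norm \<dots> \<le> (\<Sum>i. E * (1/2) ^ (i + n))"
    proof (rule norm_suminf_le)
      show "norm (d (i + n) x) \<le> E * (1 / 2) ^ (i + n)" for i using db[OF x] by simp
      show "summable (\<lambda>i. E * (1 / 2::real) ^ (i + n))"
        by (intro summable_mult summable_geometric summable_ignore_initial_segment) simp
    qed
    also have "(\<lambda>i. E * (1/2::real) ^ (i + n)) = (\<lambda>i. (E * (1/2) ^ n) * (1/2) ^ i)"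
      by (simp add: power_add fun_eq_iff mult_ac)
    also have "(\<Sum>i. (E * (1/2) ^ n) * (1/2::real) ^ i) = (E * (1/2) ^ n) * (\<Sum>i. (1/2::real) ^ i)"
      by (rule suminf_mult[OF summable_geometric]) simp
    also have "\<dots> = 4 * M * exp (4 * M) * (1/2) ^ n"
      by (subst suminf_geometric) (simp_all add: E_def)
    finally show ?thesis by simp
  qed
  ultimately show ?thesis using that by blast
qed

lemma is_kernel_exists:
  assumes tau: "\<tau> \<ge> 0"
  shows "\<exists>K. is_kernel \<tau> f c K"
proof -
  obtain K0 where K0: "continuous_on T1 K0"
    and tail: "\<And>x n. x \<in> T1 \<Longrightarrow> \<bar>K0 x - picard \<tau> f c n x\<bar> \<le> 4 * M * exp (4 * M) * (1/2) ^ n"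
    using picard_converges[OF tau] by blast
  define K where "K x = (if x \<in> T1 then K0 x else 0)" for x
  define E where "E = 4 * M * exp (4 * M)"
  have E0: "E \<ge> 0" using M_pos by (simp add: E_def)
  have Kc: "continuous_on T1 K"
    using K0 by (rule continuous_on_eq) (simp add: K_def)
  have fix_point: "K (s, q) = Krhs \<tau> f c K s q" if sq: "(s, q) \<in> T1" for s q
  proof -
    have "\<bar>K (s, q) - Krhs \<tau> f c K s q\<bar> \<le> 0 + E * (1 + exp (4 * M) / 2) * (1/2) ^ n" for n
    proof -
      have "\<bar>K (s, q) - picard \<tau> f c (Suc n) (s, q)\<bar> \<le> E * (1/2) ^ Suc n"
        using tail[OF sq, of "Suc n"] sq by (simp add: K_def E_def)
      also have "\<dots> \<le> E * (1/2) ^ n" using E0 by simp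
      finally have a: "\<bar>K (s, q) - picard \<tau> f c (Suc n) (s, q)\<bar> \<le> E * (1/2) ^ n" .
      have "\<bar>Krhs \<tau> f c K s q - Krhs \<tau> f c (picard \<tau> f c n) s q\<bar> \<le> E * (1/2) ^ n / 2 * exp (4 * M * (q - s))"
      proof (rule Krhs_contraction[OF tau Kc picard_continuous[OF tau] _ _ sq])
        show "\<forall>x\<in>T1. \<bar>K x - picard \<tau> f c n x\<bar> \<le> E * (1/2) ^ n * exp (4 * M * (snd x - fst x))"
        proof
          fix x assume x: "x \<in> T1"
          have "E * (1/2) ^ n * 1 \<le> E * (1/2) ^ n * exp (4 * M * (snd x - fst x))"
            using exp_weight_ge_1[OF M_pos x] E0 by (intro mult_left_mono) auto
          then show "\<bar>K x - picard \<tau> f c n x\<bar> \<le> E * (1/2) ^ n * exp (4 * M * (snd x - fst x))"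
            using tail[OF x, of n] x by (simp add: K_def E_def)
        qed
      qed (use E0 in simp)
      also have "\<dots> \<le> E * (1/2) ^ n / 2 * exp (4 * M)"
        using exp_weight_le[OF M_pos sq] E0 by (intro mult_left_mono) auto
      finally have b: "\<bar>Krhs \<tau> f c K s q - Krhs \<tau> f c (picard \<tau> f c n) s q\<bar> \<le> E * (1/2) ^ n / 2 * exp (4 * M)" .
      have "picard \<tau> f c (Suc n) (s, q) = Krhs \<tau> f c (picard \<tau> f c n) s q" using sq by simp
      with a b have "\<bar>K (s, q) - Krhs \<tau> f c K s q\<bar> \<le> E * (1/2) ^ n + E * (1/2) ^ n / 2 * exp (4 * M)"
        by (smt (verit))
      then show ?thesis by (simp add: algebra_simps)
    qed
    then have "\<bar>K (s, q) - Krhs \<tau> f c K s q\<bar> \<le> 0" by (rule le_if_le_plus_halving)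
    then show ?thesis by simp
  qed
  have "is_kernel \<tau> f c K"
    unfolding is_kernel_def using Kc fix_point by (auto simp: K_def)
  then show ?thesis by blast
qed

lemma kernel_stability:
  fixes K K' :: "real \<times> real \<Rightarrow> real"
  assumes tau: "\<tau> \<ge> 0" and K: "is_kernel \<tau> f c K" and K': "continuous_on T1 K'" and a: "a \<ge> 0"
    and defect: "\<And>s q. (s, q) \<in> T1 \<Longrightarrow> \<bar>K' (s, q) - Krhs \<tau> f c K' s q\<bar> \<le> a"
    and x: "x \<in> T1"
  shows "\<bar>K x - K' x\<bar> \<le> 2 * a * exp (4 * M)"
proof -
  have Kc: "continuous_on T1 K" using K by (simp add: is_kernel_def)
  obtain B where B: "\<And>x. x \<in> T1 \<Longrightarrow> \<bar>K x - K' x\<bar> \<le> B"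
    using continuous_bounded_on_T1[OF continuous_on_diff[OF Kc K']] by blast
  have "\<bar>K x - K' x\<bar> \<le> 2 * a * exp (4 * M * (snd x - fst x))"
  proof (rule weighted_bound_by_halving[where D = "\<lambda>x. K x - K' x" and A = T1, OF _ a _ B _ x])
    fix W :: real assume W: "W \<ge> 0" and h: "\<forall>x\<in>T1. \<bar>K x - K' x\<bar> \<le> W * exp (4 * M * (snd x - fst x))"
    show "\<forall>x\<in>T1. \<bar>K x - K' x\<bar> \<le> (a + W / 2) * exp (4 * M * (snd x - fst x))"
    proof (clarify)
      fix s q assume sq: "(s, q) \<in> T1"
      have "K (s, q) - K' (s, q) = (Krhs \<tau> f c K s q - Krhs \<tau> f c K' s q) - (K' (s, q) - Krhs \<tau> f c K' s q)"
        using K sq by (simp add: is_kernel_def)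
      moreover have "\<bar>Krhs \<tau> f c K s q - Krhs \<tau> f c K' s q\<bar> \<le> W / 2 * exp (4 * M * (q - s))"
        by (rule Krhs_contraction[OF tau Kc K' W h sq])
      moreover have "a \<le> a * exp (4 * M * (q - s))"
        using exp_weight_ge_1[OF M_pos sq] a mult_left_mono[of 1 _ a] by simp
      moreover have "(a + W / 2) * exp (4 * M * (q - s)) = a * exp (4 * M * (q - s)) + W / 2 * exp (4 * M * (q - s))"
        by (simp add: algebra_simps)
      ultimately show "\<bar>K (s, q) - K' (s, q)\<bar> \<le> (a + W / 2) * exp (4 * M * (snd (s, q) - fst (s, q)))"
        using defect[OF sq] abs_triangle_ineq4[of "Krhs \<tau> f c K s q - Krhs \<tau> f c K' s q" "K' (s, q) - Krhs \<tau> f c K' s q"]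
        by (simp only: fst_conv snd_conv)
    qed
  qed (use M_pos in auto)
  also have "\<dots> \<le> 2 * a * exp (4 * M)"
    using exp_weight_le[OF M_pos x] a by (intro mult_left_mono) auto
  finally show ?thesis .
qed

lemma is_kernel_unique:
  assumes "\<tau> \<ge> 0" "is_kernel \<tau> f c K1" "is_kernel \<tau> f c K2"
  shows "K1 = K2"
proof
  fix x
  show "K1 x = K2 x"
  proof (cases "x \<in> T1")
    case True
    have "\<bar>K1 x - K2 x\<bar> \<le> 2 * 0 * exp (4 * M)"
      using assms(3) by (intro kernel_stability[OF assms(1,2) _ order_refl _ True]) (auto simp: is_kernel_def)
    then show ?thesis by simp
  next
    case False
    then show ?thesis using assms(2,3) by (simp add: is_kernel_def del: mem_T1 split_paired_All)
  qed
qed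

lemma is_kernel_Kop:
  assumes "\<tau> \<ge> 0"
  shows "is_kernel \<tau> f c (Kop \<tau> f c)"
proof -
  have "\<exists>!K. is_kernel \<tau> f c K"
    using is_kernel_exists[OF assms] is_kernel_unique[OF assms] by blast
  then show ?thesis unfolding Kop_def is_kernel_def by (rule theI')
qed

lemma Kop_continuous: "\<tau> \<ge> 0 \<Longrightarrow> continuous_on T1 (Kop \<tau> f c)"
  using is_kernel_Kop by (simp add: is_kernel_def)

lemma Kop_fixed_point: "\<tau> \<ge> 0 \<Longrightarrow> (s, q) \<in> T1 \<Longrightarrow> Kop \<tau> f c (s, q) = Krhs \<tau> f c (Kop \<tau> f c) s q"
  using is_kernel_Kop by (simp add: is_kernel_def)

lemma Kop_bound:
  assumes "\<tau> \<ge> 0" "x \<in> T1"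
  shows "\<bar>Kop \<tau> f c x\<bar> \<le> kernel_bound M"
  using kernel_stability[OF assms(1) is_kernel_Kop[OF assms(1)] continuous_on_const, of "2 * M" 0]
    Krhs_zero_bound[OF assms(1)] M_pos assms(2)
  by (simp add: kernel_bound_def)

end

lemma boundary_integral_split:
  fixes K :: "real \<times> real \<Rightarrow> real" and c :: "real \<Rightarrow> real"
  assumes c: "continuous_on {0..1} c" and K: "continuous_on T1 K" and xy: "0 \<le> x" "x \<le> y" "y \<le> 1"
  shows "boundary_integral c K y - boundary_integral c K x
    = integral {y..1} (\<lambda>\<theta>. c \<theta> * (K (y, \<theta>) - K (x, \<theta>))) - integral {x..y} (\<lambda>\<theta>. c \<theta> * K (x, \<theta>))"
proof -
  have "boundary_integral c K x = integral {x..y} (\<lambda>\<theta>. c \<theta> * K (x, \<theta>)) + integral {y..1} (\<lambda>\<theta>. c \<theta> * K (x, \<theta>))"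
    unfolding boundary_integral_def using xy
    by (intro Henstock_Kurzweil_Integration.integral_combine[symmetric] boundary_integrand_integrable[OF c K]) auto
  moreover have "integral {y..1} (\<lambda>\<theta>. c \<theta> * (K (y, \<theta>) - K (x, \<theta>)))
      = boundary_integral c K y - integral {y..1} (\<lambda>\<theta>. c \<theta> * K (x, \<theta>))"
    unfolding boundary_integral_def right_diff_distrib using xy
    by (intro integral_diff boundary_integrand_integrable[OF c K]) auto
  ultimately show ?thesis by simp
qed

context kernel_data
begin

lemma boundary_integral_bound:
  assumes KB: "\<And>x. x \<in> T1 \<Longrightarrow> \<bar>K x\<bar> \<le> B" and x: "0 \<le> x" "x \<le> a" "a \<le> 1"
  shows "\<bar>integral {x..a} (\<lambda>\<theta>. c \<theta> * K (x, \<theta>))\<bar> \<le> M * B * (a - x)"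
  by (rule abs_integral_le_const) (use x in \<open>auto intro!: abs_mult_le c_bound KB\<close>)

lemma inner_integral_shift:
  fixes K :: "real \<times> real \<Rightarrow> real"
  assumes K: "continuous_on T1 K" and KB: "\<And>x. x \<in> T1 \<Longrightarrow> \<bar>K x\<bar> \<le> B" and W: "W \<ge> 0"
    and hW: "\<And>\<theta> r. (\<theta>, r) \<in> T1 \<Longrightarrow> \<theta> + h \<le> r \<Longrightarrow> \<bar>K (\<theta> + h, r) - K (\<theta>, r)\<bar> \<le> W * exp (4 * M * (r - \<theta>))"
    and th: "0 \<le> \<theta>" "h \<le> w" "\<theta> + w \<le> 1" and h: "h \<ge> 0"
  shows "\<bar>inner_integral f K (\<theta> + h, w - h) - inner_integral f K (\<theta>, w)\<bar> \<le> M * B * h + W / 4 * exp (4 * M * w)"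
proof -
  define y where "y = \<theta> + w"
  have y: "\<theta> + h \<le> y" "y \<le> 1" using th by (auto simp: y_def)
  have "inner_integral f K (\<theta> + h, w - h) = integral {\<theta> + h..y} (\<lambda>r. f (r, y) * K (\<theta> + h, r))"
    by (simp add: inner_integral_def y_def)
  moreover have "inner_integral f K (\<theta>, w)
      = integral {\<theta>..\<theta> + h} (\<lambda>r. f (r, y) * K (\<theta>, r)) + integral {\<theta> + h..y} (\<lambda>r. f (r, y) * K (\<theta>, r))"
    unfolding inner_integral_def fst_conv snd_conv y_def[symmetric] using th y h
    by (intro Henstock_Kurzweil_Integration.integral_combine[symmetric] product_integrable[OF f_cont K]) auto
  moreover have "integral {\<theta> + h..y} (\<lambda>r. f (r, y) * K (\<theta> + h, r)) - integral {\<theta> + h..y} (\<lambda>r. f (r, y) * K (\<theta>, r))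
      = integral {\<theta> + h..y} (\<lambda>r. f (r, y) * (K (\<theta> + h, r) - K (\<theta>, r)))"
    unfolding right_diff_distrib using th y h
    by (intro integral_diff[symmetric] product_integrable[OF f_cont K]) auto
  ultimately have split: "inner_integral f K (\<theta> + h, w - h) - inner_integral f K (\<theta>, w)
      = integral {\<theta> + h..y} (\<lambda>r. f (r, y) * (K (\<theta> + h, r) - K (\<theta>, r))) - integral {\<theta>..\<theta> + h} (\<lambda>r. f (r, y) * K (\<theta>, r))"
    by simp
  have "\<bar>integral {\<theta> + h..y} (\<lambda>r. f (r, y) * (K (\<theta> + h, r) - K (\<theta>, r)))\<bar>
      \<le> 0 * (y - (\<theta> + h)) + (M * W) * exp (4 * M * (y - \<theta>)) / (4 * M)"
  proof (rule abs_integral_le_exp_weight)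
    fix r assume r: "r \<in> {\<theta> + h..y}"
    have "\<bar>f (r, y) * (K (\<theta> + h, r) - K (\<theta>, r))\<bar> \<le> M * (W * exp (4 * M * (r - \<theta>)))"
      by (rule abs_mult_le) (use f_bound hW r th y h in auto)
    then show "\<bar>f (r, y) * (K (\<theta> + h, r) - K (\<theta>, r))\<bar> \<le> 0 + M * W * exp (4 * M * (r - \<theta>))" by simp
  qed (use M_pos W y in auto)
  then have "\<bar>integral {\<theta> + h..y} (\<lambda>r. f (r, y) * (K (\<theta> + h, r) - K (\<theta>, r)))\<bar> \<le> W / 4 * exp (4 * M * w)"
    using M_pos by (simp add: y_def)
  moreover have "\<bar>integral {\<theta>..\<theta> + h} (\<lambda>r. f (r, y) * K (\<theta>, r))\<bar> \<le> (M * B) * (\<theta> + h - \<theta>)"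
    by (rule abs_integral_le_const) (use th y h in \<open>auto intro!: abs_mult_le f_bound KB\<close>)
  ultimately show ?thesis
    unfolding split by (smt (verit))
qed

lemma volterra_term_shift:
  fixes K :: "real \<times> real \<Rightarrow> real"
  assumes K: "continuous_on T1 K" and KB: "\<And>x. x \<in> T1 \<Longrightarrow> \<bar>K x\<bar> \<le> B" and W: "W \<ge> 0"
    and hW: "\<And>\<theta> r. (\<theta>, r) \<in> T1 \<Longrightarrow> \<theta> + h \<le> r \<Longrightarrow> \<bar>K (\<theta> + h, r) - K (\<theta>, r)\<bar> \<le> W * exp (4 * M * (r - \<theta>))"
    and sq: "(s, q) \<in> T1" and h: "h \<ge> 0" "s + h \<le> q"
  shows "\<bar>volterra_term f K (s + h) q - volterra_term f K s q\<bar> \<le> M * B * h + W / 4 * exp (4 * M * (q - s))"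
proof -
  have B0: "B \<ge> 0" using KB[OF sq] by simp
  let ?I = "\<lambda>s \<theta>. inner_integral f K (\<theta>, q - s)"
  have shift: "volterra_term f K (s + h) q = integral {s..s + 1 - q} (\<lambda>\<theta>. ?I (s + h) (\<theta> + h))"
    using integral_shift_real_ivl[where f = "?I (s + h)" and a = "s + h" and c = h and b = "s + h + 1 - q"]
    by (simp add: volterra_term_def algebra_simps)
  have "(\<lambda>\<theta>. ?I (s + h) (\<theta> + h)) integrable_on {s..s + 1 - q}"
  proof -
    have "continuous_on {s..s + 1 - q} (\<lambda>\<theta>. inner_integral f K (\<theta> + h, q - (s + h)))"
      by (rule continuous_on_compose2[OF inner_integral_continuous[OF f_cont K], of _ "\<lambda>\<theta>. (\<theta> + h, q - (s + h))"])
         (use sq h in \<open>auto intro!: continuous_intros simp: Delta_def\<close>)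
    then show ?thesis by (rule integrable_continuous_interval)
  qed
  then have "volterra_term f K (s + h) q - volterra_term f K s q
      = integral {s..s + 1 - q} (\<lambda>\<theta>. ?I (s + h) (\<theta> + h) - ?I s \<theta>)"
    unfolding shift unfolding volterra_term_def
    by (intro integral_diff[symmetric] inner_integral_integrable[OF f_cont K sq]) auto
  also have "\<bar>\<dots>\<bar> \<le> (M * B * h + W / 4 * exp (4 * M * (q - s))) * (s + 1 - q - s)"
  proof (rule abs_integral_le_const)
    fix \<theta> assume "\<theta> \<in> {s..s + 1 - q}"
    then show "\<bar>?I (s + h) (\<theta> + h) - ?I s \<theta>\<bar> \<le> M * B * h + W / 4 * exp (4 * M * (q - s))"
      using inner_integral_shift[OF K KB W hW, of \<theta> "q - s"] sq h by (simp add: diff_diff_eq)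
  qed (use sq in auto)
  also have "\<dots> \<le> M * B * h + W / 4 * exp (4 * M * (q - s))"
    using sq h M_pos W B0 by (intro mult_left_le) auto
  finally show ?thesis .
qed

end

context lipschitz_kernel_data
begin

lemma diag_integral_shift:
  assumes sq: "(s, q) \<in> T1" and h: "h \<ge> 0" "s + h \<le> q"
  shows "\<bar>diag_integral f (s + h) q - diag_integral f s q\<bar> \<le> 2 * M * h"
proof -
  have shift: "diag_integral f (s + h) q = integral {s..s + 1 - q} (\<lambda>\<theta>. f (\<theta> + h, \<theta> - s + q))"
    using integral_shift_real_ivl[where f = "\<lambda>\<theta>. f (\<theta>, \<theta> - (s + h) + q)" and a = "s + h" and c = h and b = "s + h + 1 - q"]
    by (simp add: diag_integral_def algebra_simps)
  have "diag_integral f (s + h) q - diag_integral f s q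
      = integral {s..s + 1 - q} (\<lambda>\<theta>. f (\<theta> + h, \<theta> - s + q) - f (\<theta>, \<theta> - s + q))"
    unfolding shift unfolding diag_integral_def using sq h
    by (intro integral_diff[symmetric] diag_integrand_integrable[OF f_cont] diag_integrand_integrable[OF f_cont, where h = 0, simplified]) auto
  also have "\<bar>\<dots>\<bar> \<le> (2 * M * h) * (s + 1 - q - s)"
  proof (rule abs_integral_le_const)
    fix \<theta> assume th: "\<theta> \<in> {s..s + 1 - q}"
    have "\<bar>f (\<theta> + h, \<theta> - s + q) - f (\<theta>, \<theta> - s + q)\<bar> \<le> 2 * M * \<bar>\<theta> + h - \<theta>\<bar>"
      by (rule f_lipschitz_fst) (use th sq h in auto)
    then show "\<bar>f (\<theta> + h, \<theta> - s + q) - f (\<theta>, \<theta> - s + q)\<bar> \<le> 2 * M * h" using h by simp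
  qed (use sq in auto)
  also have "\<dots> \<le> 2 * M * h" using sq h M_pos by (simp add: mult_left_le)
  finally show ?thesis .
qed

lemma Jmap_shift:
  fixes K :: "real \<times> real \<Rightarrow> real"
  assumes K: "continuous_on T1 K" and KB: "\<And>x. x \<in> T1 \<Longrightarrow> \<bar>K x\<bar> \<le> B" and W: "W \<ge> 0"
    and hW: "\<And>\<theta> r. (\<theta>, r) \<in> T1 \<Longrightarrow> \<theta> + h \<le> r \<Longrightarrow> \<bar>K (\<theta> + h, r) - K (\<theta>, r)\<bar> \<le> W * exp (4 * M * (r - \<theta>))"
    and x: "0 \<le> x" and h: "h \<ge> 0"
  shows "\<bar>Jmap c K (x + h) - Jmap c K x\<bar> \<le> (M + M * B) * h + W / 4 * exp (4 * M * (1 - x))"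
proof -
  have B0: "B \<ge> 0" using KB[of "(0, 0)"] by simp
  have eW: "0 \<le> W / 4 * exp (4 * M * (1 - x))" using W by simp
  consider "x + h < 1" | "x < 1" "1 \<le> x + h" | "1 \<le> x" by linarith
  then show ?thesis
  proof cases
    case 1
    have "\<bar>integral {x + h..1} (\<lambda>\<theta>. c \<theta> * (K (x + h, \<theta>) - K (x, \<theta>)))\<bar>
        \<le> 0 * (1 - (x + h)) + (M * W) * exp (4 * M * (1 - x)) / (4 * M)"
    proof (rule abs_integral_le_exp_weight)
      fix \<theta> assume th: "\<theta> \<in> {x + h..1}"
      have "\<bar>c \<theta> * (K (x + h, \<theta>) - K (x, \<theta>))\<bar> \<le> M * (W * exp (4 * M * (\<theta> - x)))"
        by (rule abs_mult_le) (use c_bound hW th x h in auto)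
      then show "\<bar>c \<theta> * (K (x + h, \<theta>) - K (x, \<theta>))\<bar> \<le> 0 + M * W * exp (4 * M * (\<theta> - x))" by simp
    qed (use M_pos W 1 in auto)
    moreover have "\<bar>integral {x..x + h} (\<lambda>\<theta>. c \<theta> * K (x, \<theta>))\<bar> \<le> M * B * (x + h - x)"
      by (rule boundary_integral_bound[OF KB]) (use x h 1 in auto)
    moreover have "\<bar>c (x + h) - c x\<bar> \<le> M * \<bar>x + h - x\<bar>"
      by (rule c_lipschitz) (use x h 1 in auto)
    moreover have "Jmap c K (x + h) - Jmap c K x
        = integral {x + h..1} (\<lambda>\<theta>. c \<theta> * (K (x + h, \<theta>) - K (x, \<theta>))) - integral {x..x + h} (\<lambda>\<theta>. c \<theta> * K (x, \<theta>))
          - (c (x + h) - c x)"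
      using boundary_integral_split[OF c_cont K x, of "x + h"] 1 h by (simp add: Jmap_def)
    ultimately show ?thesis using M_pos h by (simp add: abs_le_iff algebra_simps) linarith
  next
    case 2
    have "\<bar>boundary_integral c K x\<bar> \<le> M * B * (1 - x)"
      unfolding boundary_integral_def by (rule boundary_integral_bound[OF KB]) (use x 2 in auto)
    moreover have "\<bar>c x - c 1\<bar> \<le> M * \<bar>x - 1\<bar>"
      by (rule c_lipschitz) (use x 2 in auto)
    moreover have "M * (1 - x) \<le> M * h" "M * B * (1 - x) \<le> M * B * h"
      using 2 M_pos B0 by (auto intro: mult_left_mono)
    ultimately show ?thesis using 2 eW c_end by (simp add: Jmap_def abs_le_iff algebra_simps) linarith
  next
    case 3
    then show ?thesis using eW h M_pos B0 by (simp add: Jmap_def)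
  qed
qed

end

definition kernel_lip_fst :: "real \<Rightarrow> real" where
  "kernel_lip_fst M = 2 * (3 * M + 2 * M * kernel_bound M) * exp (4 * M)"

definition Jmap_lip :: "real \<Rightarrow> real" where
  "Jmap_lip M = M + M * kernel_bound M + kernel_lip_fst M * exp (4 * M)"

context lipschitz_kernel_data
begin

lemma Kop_lipschitz_fst:
  assumes tau: "\<tau> \<ge> 0" and sq: "(s, q) \<in> T1" and h: "h \<ge> 0" "s + h \<le> q"
  shows "\<bar>Kop \<tau> f c (s + h, q) - Kop \<tau> f c (s, q)\<bar> \<le> kernel_lip_fst M * h"
proof -
  define K where "K = Kop \<tau> f c"
  define B where "B = kernel_bound M"
  define A where "A = {x \<in> T1. fst x + h \<le> snd x}"
  define a where "a = (3 * M + 2 * M * B) * h"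
  have Kc: "continuous_on T1 K" unfolding K_def by (rule Kop_continuous[OF tau])
  have KB: "\<And>x. x \<in> T1 \<Longrightarrow> \<bar>K x\<bar> \<le> B" unfolding K_def B_def by (rule Kop_bound[OF tau])
  have B0: "B \<ge> 0" using M_pos by (simp add: B_def kernel_bound_def)
  have a0: "a \<ge> 0" using M_pos B0 h by (simp add: a_def)
  have "\<bar>K (fst (s, q) + h, snd (s, q)) - K (s, q)\<bar> \<le> 2 * a * exp (4 * M * (snd (s, q) - fst (s, q)))"
  proof (rule weighted_bound_by_halving[where A = A and B = "2 * B" and D = "\<lambda>x. K (fst x + h, snd x) - K x"])
    show "\<bar>K (fst x + h, snd x) - K x\<bar> \<le> 2 * B" if "x \<in> A" for x
      using KB[of x] KB[of "(fst x + h, snd x)"] that h by (auto simp: A_def T1_def)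
    fix W :: real assume W: "W \<ge> 0" and hA: "\<forall>x\<in>A. \<bar>K (fst x + h, snd x) - K x\<bar> \<le> W * exp (4 * M * (snd x - fst x))"
    have hW: "\<bar>K (\<theta> + h, r) - K (\<theta>, r)\<bar> \<le> W * exp (4 * M * (r - \<theta>))" if "(\<theta>, r) \<in> T1" "\<theta> + h \<le> r" for \<theta> r
      using hA that by (auto simp: A_def)
    show "\<forall>x\<in>A. \<bar>K (fst x + h, snd x) - K x\<bar> \<le> (a + W / 2) * exp (4 * M * (snd x - fst x))"
    proof (clarify)
      fix s' q' assume "(s', q') \<in> A"
      then have sq': "(s', q') \<in> T1" and hq: "s' + h \<le> q'" by (auto simp: A_def)
      define x where "x = s' - q' + 1 + \<tau>"
      have x0: "0 \<le> x" and x1: "1 - x \<le> q' - s'" using sq' tau by (auto simp: x_def)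
      have "K (s' + h, q') - K (s', q') = Krhs \<tau> f c K (s' + h) q' - Krhs \<tau> f c K s' q'"
        using sq' hq h by (simp add: K_def Kop_fixed_point[OF tau])
      also have "\<dots> = (Jmap c K (x + h) - Jmap c K x) - (diag_integral f (s' + h) q' - diag_integral f s' q')
          + (volterra_term f K (s' + h) q' - volterra_term f K s' q')"
        unfolding Krhs_decompose x_def by (simp add: algebra_simps)
      finally have eq: "K (s' + h, q') - K (s', q') = \<dots>" .
      have "\<bar>Jmap c K (x + h) - Jmap c K x\<bar> \<le> (M + M * B) * h + W / 4 * exp (4 * M * (1 - x))"
        by (rule Jmap_shift[OF Kc KB W hW x0 h(1)])
      also have "\<dots> \<le> (M + M * B) * h + W / 4 * exp (4 * M * (q' - s'))"
        using x1 W M_pos by (simp add: mult_left_mono)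
      finally have "\<bar>Jmap c K (x + h) - Jmap c K x\<bar> \<le> (M + M * B) * h + W / 4 * exp (4 * M * (q' - s'))" .
      moreover have "\<bar>diag_integral f (s' + h) q' - diag_integral f s' q'\<bar> \<le> 2 * M * h"
        by (rule diag_integral_shift[OF sq' h(1) hq])
      moreover have "\<bar>volterra_term f K (s' + h) q' - volterra_term f K s' q'\<bar> \<le> M * B * h + W / 4 * exp (4 * M * (q' - s'))"
        by (rule volterra_term_shift[OF Kc KB W hW sq' h(1) hq])
      moreover have "a \<le> a * exp (4 * M * (q' - s'))"
        using exp_weight_ge_1[OF M_pos sq'] a0 mult_left_mono[of 1 _ a] by simp
      ultimately have "\<bar>K (s' + h, q') - K (s', q')\<bar> \<le> a * exp (4 * M * (q' - s')) + W / 2 * exp (4 * M * (q' - s'))"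
        unfolding eq a_def by (simp add: abs_le_iff algebra_simps)
      then show "\<bar>K (fst (s', q') + h, snd (s', q')) - K (s', q')\<bar> \<le> (a + W / 2) * exp (4 * M * (snd (s', q') - fst (s', q')))"
        by (simp add: algebra_simps)
    qed
  qed (use M_pos a0 sq h in \<open>auto simp: A_def\<close>)
  also have "\<dots> \<le> 2 * a * exp (4 * M)"
    using exp_weight_le[OF M_pos sq] a0 by (intro mult_left_mono) auto
  finally show ?thesis by (simp add: K_def B_def kernel_lip_fst_def a_def mult_ac)
qed

lemma Jmap_Kop_lipschitz:
  assumes tau: "\<tau> \<ge> 0" and xy: "0 \<le> x" "0 \<le> y"
  shows "\<bar>Jmap c (Kop \<tau> f c) y - Jmap c (Kop \<tau> f c) x\<bar> \<le> Jmap_lip M * \<bar>y - x\<bar>"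
proof -
  have ordered: "\<bar>Jmap c (Kop \<tau> f c) (x + h) - Jmap c (Kop \<tau> f c) x\<bar> \<le> Jmap_lip M * h"
    if x: "0 \<le> x" and h: "0 \<le> h" for x h
  proof -
    define L where "L = kernel_lip_fst M"
    have L0: "L \<ge> 0" using M_pos by (simp add: L_def kernel_lip_fst_def kernel_bound_def)
    have hW: "\<bar>Kop \<tau> f c (\<theta> + h, r) - Kop \<tau> f c (\<theta>, r)\<bar> \<le> L * h * exp (4 * M * (r - \<theta>))"
      if "(\<theta>, r) \<in> T1" "\<theta> + h \<le> r" for \<theta> r
    proof -
      have "\<bar>Kop \<tau> f c (\<theta> + h, r) - Kop \<tau> f c (\<theta>, r)\<bar> \<le> L * h * 1"
        using Kop_lipschitz_fst[OF tau that(1) h that(2)] by (simp add: L_def)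
      also have "\<dots> \<le> L * h * exp (4 * M * (r - \<theta>))"
        using exp_weight_ge_1[OF M_pos that(1)] L0 h by (intro mult_left_mono) auto
      finally show ?thesis .
    qed
    have "\<bar>Jmap c (Kop \<tau> f c) (x + h) - Jmap c (Kop \<tau> f c) x\<bar>
        \<le> (M + M * kernel_bound M) * h + L * h / 4 * exp (4 * M * (1 - x))"
      using Jmap_shift[OF Kop_continuous[OF tau] Kop_bound[OF tau] _ hW x h] L0 h by simp
    also have "L * h / 4 * exp (4 * M * (1 - x)) \<le> L * h * exp (4 * M)"
    proof -
      have "L * h * exp (4 * M * (1 - x)) \<le> L * h * exp (4 * M)"
        using x M_pos L0 h by (intro mult_left_mono) auto
      moreover have "0 \<le> L * h * exp (4 * M * (1 - x))" using L0 h by simp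
      moreover have "L * h / 4 * exp (4 * M * (1 - x)) = L * h * exp (4 * M * (1 - x)) / 4" by simp
      ultimately show ?thesis by linarith
    qed
    finally show ?thesis by (simp add: Jmap_lip_def L_def algebra_simps)
  qed
  show ?thesis
  proof (cases "x \<le> y")
    case True
    then show ?thesis using ordered[OF xy(1), of "y - x"] by simp
  next
    case False
    then show ?thesis using ordered[OF xy(2), of "x - y"] by (simp add: abs_minus_commute)
  qed
qed

end

lemma Jmap_difference:
  fixes K1 K2 :: "real \<times> real \<Rightarrow> real"
  assumes c: "continuous_on {0..1} c1" "continuous_on {0..1} c2" and K: "continuous_on T1 K1" "continuous_on T1 K2"
    and c1_bound: "\<And>x. x \<in> {0..1} \<Longrightarrow> \<bar>c1 x\<bar> \<le> M" and K2_bound: "\<And>x. x \<in> T1 \<Longrightarrow> \<bar>K2 x\<bar> \<le> B"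
    and dK: "\<And>x. x \<in> T1 \<Longrightarrow> \<bar>K1 x - K2 x\<bar> \<le> E" and dc: "\<And>x. x \<in> {0..1} \<Longrightarrow> \<bar>c1 x - c2 x\<bar> \<le> \<delta>"
    and \<sigma>: "\<sigma> \<ge> 0"
  shows "\<bar>Jmap c1 K1 \<sigma> - Jmap c2 K2 \<sigma>\<bar> \<le> \<delta> + M * E + B * \<delta>"
proof -
  have nonneg: "0 \<le> M" "0 \<le> B" "0 \<le> E" "0 \<le> \<delta>"
    using c1_bound[of 0] K2_bound[of "(0, 0)"] dK[of "(0, 0)"] dc[of 0] by (auto intro: order_trans[OF abs_ge_zero])
  show ?thesis
  proof (cases "\<sigma> < 1")
    case True
    have "\<bar>integral {\<sigma>..1} (\<lambda>\<theta>. c1 \<theta> * K1 (\<sigma>, \<theta>) - c2 \<theta> * K2 (\<sigma>, \<theta>))\<bar> \<le> (M * E + \<delta> * B) * (1 - \<sigma>)"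
    proof (rule abs_integral_le_const)
      fix \<theta> assume th: "\<theta> \<in> {\<sigma>..1}"
      have "\<bar>c1 \<theta> * (K1 (\<sigma>, \<theta>) - K2 (\<sigma>, \<theta>))\<bar> \<le> M * E"
        by (rule abs_mult_le) (use c1_bound dK th \<sigma> in auto)
      moreover have "\<bar>(c1 \<theta> - c2 \<theta>) * K2 (\<sigma>, \<theta>)\<bar> \<le> \<delta> * B"
        by (rule abs_mult_le) (use dc K2_bound th \<sigma> in auto)
      ultimately show "\<bar>c1 \<theta> * K1 (\<sigma>, \<theta>) - c2 \<theta> * K2 (\<sigma>, \<theta>)\<bar> \<le> M * E + \<delta> * B"
        by (smt (verit) right_diff_distrib left_diff_distrib)
    qed (use True in auto)
    also have "\<dots> \<le> M * E + \<delta> * B"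
      using True \<sigma> nonneg by (intro mult_left_le) auto
    finally have "\<bar>boundary_integral c1 K1 \<sigma> - boundary_integral c2 K2 \<sigma>\<bar> \<le> M * E + \<delta> * B"
      using boundary_integral_diff[OF c K \<sigma>] by simp
    moreover have "\<bar>c1 \<sigma> - c2 \<sigma>\<bar> \<le> \<delta>" using dc \<sigma> True by auto
    ultimately show ?thesis using True by (simp add: Jmap_def abs_le_iff algebra_simps)
  next
    case False
    then show ?thesis using nonneg by (simp add: Jmap_def)
  qed
qed

lemma Krhs_data_perturbation:
  fixes K :: "real \<times> real \<Rightarrow> real"
  assumes d1: "kernel_data M f1 c1" and d2: "kernel_data M f2 c2"
    and K: "continuous_on T1 K" and KB: "\<And>x. x \<in> T1 \<Longrightarrow> \<bar>K x\<bar> \<le> B"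
    and df: "\<And>x. x \<in> T1 \<Longrightarrow> \<bar>f1 x - f2 x\<bar> \<le> \<delta>"
    and dc: "\<And>x. x \<in> {0..1} \<Longrightarrow> \<bar>c1 x - c2 x\<bar> \<le> \<delta>"
    and tau: "\<tau> \<ge> 0" and sq: "(s, q) \<in> T1"
  shows "\<bar>Krhs \<tau> f1 c1 K s q - Krhs \<tau> f2 c2 K s q\<bar> \<le> 2 * \<delta> * (1 + B)"
proof -
  note f = kernel_data.f_cont[OF d1] kernel_data.f_cont[OF d2]
  note c = kernel_data.c_cont[OF d1] kernel_data.c_cont[OF d2]
  have B0: "B \<ge> 0" and \<delta>0: "\<delta> \<ge> 0" using KB[OF sq] df[OF sq] by auto
  have "\<bar>diag_integral f1 s q - diag_integral f2 s q\<bar> \<le> \<delta> * (s + 1 - q - s)"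
    unfolding diag_integral_diff[OF f sq] by (rule abs_integral_le_const) (use sq df in auto)
  also have "\<dots> \<le> \<delta>" using sq \<delta>0 by (simp add: mult_left_le)
  finally have diag: "\<bar>diag_integral f1 s q - diag_integral f2 s q\<bar> \<le> \<delta>" .
  have "\<bar>volterra_term f1 K s q - volterra_term f2 K s q\<bar> \<le> \<delta> * B + 0 * exp (1 * (q - s)) / 1"
    unfolding volterra_term_diff[OF f K K sq]
  proof (rule abs_double_integral_le_exp_weight[OF sq])
    fix \<theta> r assume h: "s \<le> \<theta>" "\<theta> \<le> s + 1 - q" "\<theta> \<le> r" "r \<le> \<theta> - s + q"
    have "\<bar>(f1 (r, \<theta> - s + q) - f2 (r, \<theta> - s + q)) * K (\<theta>, r)\<bar> \<le> \<delta> * B"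
      by (rule abs_mult_le) (use df KB h sq in auto)
    then show "\<bar>f1 (r, \<theta> - s + q) * K (\<theta>, r) - f2 (r, \<theta> - s + q) * K (\<theta>, r)\<bar> \<le> \<delta> * B + 0 * exp (1 * (r - \<theta>))"
      by (simp add: algebra_simps)
  qed (use \<delta>0 B0 in auto)
  then have volterra: "\<bar>volterra_term f1 K s q - volterra_term f2 K s q\<bar> \<le> \<delta> * B" by simp
  have "\<bar>Jmap c1 K (s - q + 1 + \<tau>) - Jmap c2 K (s - q + 1 + \<tau>)\<bar> \<le> \<delta> + M * 0 + B * \<delta>"
    by (rule Jmap_difference[OF c K K kernel_data.c_bound[OF d1] KB _ dc]) (use sq tau in auto)
  with diag volterra show ?thesis
    unfolding Krhs_decompose by (simp add: abs_le_iff algebra_simps)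
qed

definition Kop_lip :: "real \<Rightarrow> real" where
  "Kop_lip M = 2 * (2 * (1 + kernel_bound M) + Jmap_lip M) * exp (4 * M)"

definition Jop_lip :: "real \<Rightarrow> real" where
  "Jop_lip M = 1 + M * Kop_lip M + kernel_bound M"

lemma Kop_lip_pos: "M > 0 \<Longrightarrow> Kop_lip M > 0"
  and Jmap_lip_nonneg: "M > 0 \<Longrightarrow> Jmap_lip M \<ge> 0"
  and Jop_lip_pos: "M > 0 \<Longrightarrow> Jop_lip M > 0"
  by (simp_all add: Kop_lip_def Jop_lip_def Jmap_lip_def kernel_lip_fst_def kernel_bound_def
      add_pos_nonneg pos_add_strict)

text \<open>Kop \<tau>2 f2 c2 solves the equation for (\<tau>1, f1, c1) up to a defect O(\<delta>), so stability applies.\<close>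
lemma Kop_lipschitz:
  assumes d1: "kernel_data M f1 c1" and d2: "lipschitz_kernel_data M f2 c2"
    and tau: "\<tau>1 \<ge> 0" "\<tau>2 \<ge> 0" and d\<tau>: "\<bar>\<tau>1 - \<tau>2\<bar> \<le> \<delta>"
    and df: "\<And>x. x \<in> T1 \<Longrightarrow> \<bar>f1 x - f2 x\<bar> \<le> \<delta>"
    and dc: "\<And>x. x \<in> {0..1} \<Longrightarrow> \<bar>c1 x - c2 x\<bar> \<le> \<delta>"
    and x: "x \<in> T1"
  shows "\<bar>Kop \<tau>1 f1 c1 x - Kop \<tau>2 f2 c2 x\<bar> \<le> Kop_lip M * \<delta>"
proof -
  interpret d2: lipschitz_kernel_data M f2 c2 by (rule d2)
  define K where "K = Kop \<tau>2 f2 c2"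
  define a where "a = (2 * (1 + kernel_bound M) + Jmap_lip M) * \<delta>"
  have \<delta>0: "\<delta> \<ge> 0" using d\<tau> by simp
  have defect: "\<bar>K (s, q) - Krhs \<tau>1 f1 c1 K s q\<bar> \<le> a" if sq: "(s, q) \<in> T1" for s q
  proof -
    have "\<bar>Krhs \<tau>2 f2 c2 K s q - Krhs \<tau>1 f2 c2 K s q\<bar> \<le> Jmap_lip M * \<bar>\<tau>2 - \<tau>1\<bar>"
      unfolding Krhs_decompose K_def
      using d2.Jmap_Kop_lipschitz[OF tau(2), of "s - q + 1 + \<tau>1" "s - q + 1 + \<tau>2"] sq tau by simp
    also have "\<dots> \<le> Jmap_lip M * \<delta>"
      using d\<tau> Jmap_lip_nonneg[OF d2.M_pos] by (simp add: abs_minus_commute mult_left_mono)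
    finally have "\<bar>Krhs \<tau>2 f2 c2 K s q - Krhs \<tau>1 f2 c2 K s q\<bar> \<le> Jmap_lip M * \<delta>" .
    moreover have "\<bar>Krhs \<tau>1 f2 c2 K s q - Krhs \<tau>1 f1 c1 K s q\<bar> \<le> 2 * \<delta> * (1 + kernel_bound M)"
      by (rule Krhs_data_perturbation[OF d2.kernel_data_axioms d1])
        (use df dc tau sq in \<open>auto simp: K_def abs_minus_commute intro: d2.Kop_continuous d2.Kop_bound\<close>)
    moreover have "K (s, q) = Krhs \<tau>2 f2 c2 K s q"
      unfolding K_def using d2.Kop_fixed_point[OF tau(2) sq] .
    ultimately show ?thesis by (simp add: a_def abs_le_iff algebra_simps)
  qed
  have Kc: "continuous_on T1 K" unfolding K_def by (rule d2.Kop_continuous[OF tau(2)])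
  have a0: "a \<ge> 0"
    using \<delta>0 Jmap_lip_nonneg[OF d2.M_pos] d2.M_pos by (simp add: a_def kernel_bound_def)
  have "\<bar>Kop \<tau>1 f1 c1 x - K x\<bar> \<le> 2 * a * exp (4 * M)"
    by (rule kernel_data.kernel_stability[OF d1 tau(1) kernel_data.is_kernel_Kop[OF d1 tau(1)] Kc a0 defect x])
  then show ?thesis by (simp add: K_def a_def Kop_lip_def mult_ac)
qed

lemma Jop_lipschitz:
  assumes d1: "kernel_data M f1 c1" and d2: "lipschitz_kernel_data M f2 c2"
    and tau: "\<tau>1 \<ge> 0" "\<tau>2 \<ge> 0" and d\<tau>: "\<bar>\<tau>1 - \<tau>2\<bar> \<le> \<delta>"
    and df: "\<And>x. x \<in> T1 \<Longrightarrow> \<bar>f1 x - f2 x\<bar> \<le> \<delta>"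
    and dc: "\<And>x. x \<in> {0..1} \<Longrightarrow> \<bar>c1 x - c2 x\<bar> \<le> \<delta>"
    and \<sigma>: "\<sigma> \<ge> 0"
  shows "\<bar>Jop \<tau>1 f1 c1 \<sigma> - Jop \<tau>2 f2 c2 \<sigma>\<bar> \<le> Jop_lip M * \<delta>"
proof -
  interpret d2: lipschitz_kernel_data M f2 c2 by (rule d2)
  have "\<bar>Jmap c1 (Kop \<tau>1 f1 c1) \<sigma> - Jmap c2 (Kop \<tau>2 f2 c2) \<sigma>\<bar> \<le> \<delta> + M * (Kop_lip M * \<delta>) + kernel_bound M * \<delta>"
    by (rule Jmap_difference[OF kernel_data.c_cont[OF d1] d2.c_cont kernel_data.Kop_continuous[OF d1 tau(1)]
          d2.Kop_continuous[OF tau(2)] kernel_data.c_bound[OF d1] d2.Kop_bound[OF tau(2)]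
          Kop_lipschitz[OF d1 d2 tau d\<tau> df dc] dc \<sigma>])
  then show ?thesis by (simp add: Jop_eq_Jmap Jop_lip_def algebra_simps)
qed

lemma Lop_lipschitz:
  assumes d1: "kernel_data M f1 c1" and d2: "lipschitz_kernel_data M f2 c2"
    and tau: "\<tau>1 \<ge> 0" "\<tau>2 \<ge> 0" and eta_nonneg: "\<eta>1 \<ge> 0" "\<eta>2 \<ge> 0"
    and d\<tau>: "\<bar>\<tau>1 - \<tau>2\<bar> \<le> \<delta>" and d\<eta>: "\<bar>\<eta>1 - \<eta>2\<bar> \<le> \<delta>"
    and df: "\<And>x. x \<in> T1 \<Longrightarrow> \<bar>f1 x - f2 x\<bar> \<le> \<delta>"
    and dc: "\<And>x. x \<in> {0..1} \<Longrightarrow> \<bar>c1 x - c2 x\<bar> \<le> \<delta>"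
    and phi_nonneg: "\<phi> \<ge> 0"
  shows "\<bar>Lop \<tau>1 \<eta>1 f1 c1 \<phi> - Lop \<tau>2 \<eta>2 f2 c2 \<phi>\<bar> \<le> (Jop_lip M + Jmap_lip M) * \<delta>"
proof (cases "\<phi> < 1")
  case True
  interpret d2: lipschitz_kernel_data M f2 c2 by (rule d2)
  have "0 \<le> \<phi> + \<eta>1" using phi_nonneg eta_nonneg by linarith
  then have "\<bar>Jop \<tau>1 f1 c1 (\<phi> + \<eta>1) - Jop \<tau>2 f2 c2 (\<phi> + \<eta>1)\<bar> \<le> Jop_lip M * \<delta>"
    using Jop_lipschitz[OF d1 d2 tau d\<tau> df dc] by simp
  moreover have "\<bar>Jop \<tau>2 f2 c2 (\<phi> + \<eta>1) - Jop \<tau>2 f2 c2 (\<phi> + \<eta>2)\<bar> \<le> Jmap_lip M * \<delta>"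
  proof -
    have "\<bar>Jop \<tau>2 f2 c2 (\<phi> + \<eta>1) - Jop \<tau>2 f2 c2 (\<phi> + \<eta>2)\<bar> \<le> Jmap_lip M * \<bar>(\<phi> + \<eta>1) - (\<phi> + \<eta>2)\<bar>"
      unfolding Jop_eq_Jmap by (rule d2.Jmap_Kop_lipschitz) (use tau phi_nonneg eta_nonneg in auto)
    also have "\<dots> \<le> Jmap_lip M * \<delta>"
      using d\<eta> Jmap_lip_nonneg[OF d2.M_pos] by (simp add: mult_left_mono)
    finally show ?thesis .
  qed
  ultimately show ?thesis
    using True by (simp add: Lop_def abs_le_iff algebra_simps)
next
  case False
  have "0 \<le> \<delta>" using d\<tau> by simp
  with False show ?thesis
    using Jop_lip_pos[OF kernel_data.M_pos[OF d1]] Jmap_lip_nonneg[OF kernel_data.M_pos[OF d1]]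
    by (simp add: Lop_def)
qed

lemma abs_le_supn:
  assumes "\<And>x. x \<in> A \<Longrightarrow> \<bar>g x\<bar> \<le> B" "x \<in> A"
  shows "\<bar>g x\<bar> \<le> supn A g"
  unfolding supn_def by (rule cSup_upper) (use assms in \<open>auto intro!: bdd_aboveI[where M = B]\<close>)

lemma supn_le:
  assumes "A \<noteq> {}" "\<And>x. x \<in> A \<Longrightarrow> \<bar>g x\<bar> \<le> C"
  shows "supn A g \<le> C"
  unfolding supn_def by (rule cSup_least) (use assms in auto)

lemma data_difference_le_supn:
  assumes "kernel_data M f1 c1" "kernel_data M f2 c2"
  shows "p \<in> T1 \<Longrightarrow> \<bar>f1 p - f2 p\<bar> \<le> supn T1 (\<lambda>x. f1 x - f2 x)"
    and "x \<in> {0..1} \<Longrightarrow> \<bar>c1 x - c2 x\<bar> \<le> supn {0..1} (\<lambda>x. c1 x - c2 x)"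
  using kernel_data.f_bound[OF assms(1)] kernel_data.f_bound[OF assms(2)]
    kernel_data.c_bound[OF assms(1)] kernel_data.c_bound[OF assms(2)]
  by (auto intro!: abs_le_supn[where B = "2 * M"] simp del: atLeastAtMost_iff)
    (smt (verit))+

theorem lemma1:
  fixes \<tau>bar M :: real
  assumes "\<tau>bar > 0" and "M > 0"
  shows "\<exists>LK LJ LL. LK > 0 \<and> LJ > 0 \<and> LL > 0 \<and>
    (\<forall>\<tau>1 \<tau>2 \<eta>1 \<eta>2 f1 f2 c1 c2.
       \<tau>1 \<in> {0<..\<tau>bar} \<and> \<tau>2 \<in> {0<..\<tau>bar} \<and> \<eta>1 \<in> {0<..<\<tau>1} \<and> \<eta>2 \<in> {0<..<\<tau>2} \<and>
       C1_T1_bounded f1 M \<and> C1_T1_bounded f2 M \<and>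
       Cunder_bounded c1 M \<and> Cunder_bounded c2 M \<longrightarrow>
       supn T1 (\<lambda>x. Kop \<tau>1 f1 c1 x - Kop \<tau>2 f2 c2 x)
         \<le> LK * Max {\<bar>\<tau>1 - \<tau>2\<bar>, supn T1 (\<lambda>x. f1 x - f2 x), supn {0..1} (\<lambda>x. c1 x - c2 x)} \<and>
       supn {0..1} (\<lambda>x. Lop \<tau>1 \<eta>1 f1 c1 x - Lop \<tau>2 \<eta>2 f2 c2 x)
         \<le> LL * Max {\<bar>\<tau>1 - \<tau>2\<bar>, \<bar>\<eta>1 - \<eta>2\<bar>, supn T1 (\<lambda>x. f1 x - f2 x),
                     supn {0..1} (\<lambda>x. c1 x - c2 x)} \<and>
       supn {0..1} (\<lambda>x. Jop \<tau>1 f1 c1 x - Jop \<tau>2 f2 c2 x)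
         \<le> LJ * Max {\<bar>\<tau>1 - \<tau>2\<bar>, supn T1 (\<lambda>x. f1 x - f2 x), supn {0..1} (\<lambda>x. c1 x - c2 x)})"
proof (rule exI[of _ "Kop_lip M"], rule exI[of _ "Jop_lip M"], rule exI[of _ "Jop_lip M + Jmap_lip M"],
    intro conjI allI impI)
  show "Kop_lip M > 0" "Jop_lip M > 0" "Jop_lip M + Jmap_lip M > 0"
    using Kop_lip_pos Jop_lip_pos Jmap_lip_nonneg assms(2) by (auto intro: add_pos_nonneg)
  fix \<tau>1 \<tau>2 \<eta>1 \<eta>2 f1 f2 c1 c2
  assume "\<tau>1 \<in> {0<..\<tau>bar} \<and> \<tau>2 \<in> {0<..\<tau>bar} \<and> \<eta>1 \<in> {0<..<\<tau>1} \<and> \<eta>2 \<in> {0<..<\<tau>2} \<and>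
       C1_T1_bounded f1 M \<and> C1_T1_bounded f2 M \<and> Cunder_bounded c1 M \<and> Cunder_bounded c2 M"
  then have tau: "\<tau>1 \<ge> 0" "\<tau>2 \<ge> 0" and eta: "\<eta>1 \<ge> 0" "\<eta>2 \<ge> 0"
    and d: "lipschitz_kernel_data M f1 c1" "lipschitz_kernel_data M f2 c2"
    using lipschitz_kernel_data_if_C1_bounded[OF assms(2)] by auto
  note kd = lipschitz_kernel_data.axioms(1)[OF d(1)] lipschitz_kernel_data.axioms(1)[OF d(2)]
  define \<delta> where "\<delta> = Max {\<bar>\<tau>1 - \<tau>2\<bar>, supn T1 (\<lambda>x. f1 x - f2 x), supn {0..1} (\<lambda>x. c1 x - c2 x)}"
  define \<delta>' where "\<delta>' = Max {\<bar>\<tau>1 - \<tau>2\<bar>, \<bar>\<eta>1 - \<eta>2\<bar>, supn T1 (\<lambda>x. f1 x - f2 x), supn {0..1} (\<lambda>x. c1 x - c2 x)}"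
  have \<delta>: "\<bar>\<tau>1 - \<tau>2\<bar> \<le> \<delta>" "\<And>x. x \<in> T1 \<Longrightarrow> \<bar>f1 x - f2 x\<bar> \<le> \<delta>" "\<And>x. x \<in> {0..1} \<Longrightarrow> \<bar>c1 x - c2 x\<bar> \<le> \<delta>"
    using data_difference_le_supn[OF kd] by (auto simp: \<delta>_def le_max_iff_disj simp del: atLeastAtMost_iff)
  have \<delta>': "\<bar>\<tau>1 - \<tau>2\<bar> \<le> \<delta>'" "\<bar>\<eta>1 - \<eta>2\<bar> \<le> \<delta>'" "\<And>x. x \<in> T1 \<Longrightarrow> \<bar>f1 x - f2 x\<bar> \<le> \<delta>'"
      "\<And>x. x \<in> {0..1} \<Longrightarrow> \<bar>c1 x - c2 x\<bar> \<le> \<delta>'"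
    using data_difference_le_supn[OF kd] by (auto simp: \<delta>'_def le_max_iff_disj simp del: atLeastAtMost_iff)
  show "supn T1 (\<lambda>x. Kop \<tau>1 f1 c1 x - Kop \<tau>2 f2 c2 x) \<le> Kop_lip M * \<delta>"
    by (rule supn_le) (auto intro: Kop_lipschitz[OF kd(1) d(2) tau \<delta>] simp: T1_def intro!: exI[of _ 0])
  show "supn {0..1} (\<lambda>x. Jop \<tau>1 f1 c1 x - Jop \<tau>2 f2 c2 x) \<le> Jop_lip M * \<delta>"
    by (rule supn_le) (auto intro: Jop_lipschitz[OF kd(1) d(2) tau \<delta>])
  show "supn {0..1} (\<lambda>x. Lop \<tau>1 \<eta>1 f1 c1 x - Lop \<tau>2 \<eta>2 f2 c2 x) \<le> (Jop_lip M + Jmap_lip M) * \<delta>'"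
    by (rule supn_le) (auto intro: Lop_lipschitz[OF kd(1) d(2) tau eta \<delta>'])
qed

end
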